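(* Let $k\ge1$ and $n\ge1$ be integers such that $\mathcal K=J(k,2n)$ is a hyperbolic knot, let $\rho_0$ be its holonomy representation, conjugated so that $\rho_0(a)=\begin{bmatrix} M&1\\0&M^{-1}\end{bmatrix}$, $\rho_0(b)=\begin{bmatrix} M&0\\2-y&M^{-1}\end{bmatrix}$ for the generators $a,b$ of $G(\mathcal K)=\langle a,b\mid w^na=bw^n\rangle$ (with $w=(ba^{-1})^m(b^{-1}a)^m$ if $k=2m$ and $w=(ba^{-1})^mba(b^{-1}a)^m$ if $k=2m+1$), and let $y=\operatorname{tr}\rho_0(ab^{-1})$, $z=\operatorname{tr}\rho_0(w)$. Then, up to multiplication by $\pm t^i$, the adjoint twisted Alexander polynomial $\Delta^{\mathrm{Ad}\circ\rho_0}_{\mathcal K}(t)$ is a polynomial in $t$ of degree $D$ whose leading coefficient is $c$ and whose constant term is $\pm c$, where: (i) if $k=2m$: $D=3$ and $c=mn\,S_{m-1}(y)^2S_{n-1}(z)^2$; (ii) if $k=2m+1\ge3$: $D=6n-3$ and $c=m\,S_{m-1}(y)^2$; (iii) if $k=1$ and $n\ge2$: $D=6n-9$ and $c=1$.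
   Context: $J(k,l)$ denotes the double twist knot/link, the rational knot/link corresponding to the continued fraction $-k+\frac1l$. The holonomy representation $\rho_0:G(\mathcal K)\to\mathrm{SL}_2(\mathbb C)$ of a hyperbolic knot is a lift of the discrete faithful representation into $\mathrm{PSL}_2(\mathbb C)$ given by the complete hyperbolic structure of the knot exterior. $\mathrm{Ad}:\mathrm{SL}_2(\mathbb C)\to\mathrm{SL}_3(\mathbb C)$ is the adjoint action on $\mathfrak{sl}_2(\mathbb C)$. Wada's twisted Alexander polynomial for $\rho:G\to\mathrm{SL}_d(\mathbb C)$ and a presentation $\langle x_1,\dots,x_l\mid r_1,\dots,r_{l-1}\rangle$ with abelianization $x_i\mapsto t$: with $\Phi(x)=\mathfrak a(x)\rho(x)$ extended to group rings, $\Delta^\rho(t)=\det\big(\Phi(\partial r_i/\partial x_s)\big)_{s\neq j}/\det\Phi(1-x_j)$ (Fox derivatives), defined up to $\pm t^i$; for the presentation above, $\Delta^{\mathrm{Ad}\circ\rho_0}_{\mathcal K}(t)=\det\Phi(\partial r/\partial a)/\det\Phi(1-b)$ with $r=w^naw^{-n}b^{-1}$. $S_l$ are the Chebyshev polynomials of the second kind: $S_0=1$, $S_1=v$, $S_l=vS_{l-1}-S_{l-2}$ for all $l\in\mathbb Z$. *)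

theory Defs
  imports "HOL-Analysis.Analysis" "HOL-Computational_Algebra.Polynomial"
begin

datatype gen = GA | GB

type_synonym letter = "gen \<times> bool"   (* (x, True) = x, (x, False) = x^-1 *)
type_synonym word = "letter list"

definition inv_letter :: "letter \<Rightarrow> letter" where
  "inv_letter l = (fst l, \<not> snd l)"

definition inv_word :: "word \<Rightarrow> word" where
  "inv_word u = rev (map inv_letter u)"

definition la :: letter where "la = (GA, True)"
definition lb :: letter where "lb = (GB, True)"
definition la' :: letter where "la' = (GA, False)"
definition lb' :: letter where "lb' = (GB, False)"

fun wpow :: "word \<Rightarrow> nat \<Rightarrow> word" where
  "wpow u 0 = []"
| "wpow u (Suc j) = u @ wpow u j"

definition w_word :: "nat \<Rightarrow> word" where
  "w_word k = (let m = k div 2 in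
     if even k then wpow [lb, la'] m @ wpow [lb', la] m
     else wpow [lb, la'] m @ [lb, la] @ wpow [lb', la] m)"

text \<open>The relator r = w^n a w^-n b^-1 of G(J(k,2n)) = < a, b | w^n a = b w^n >.\<close>
definition relator :: "nat \<Rightarrow> nat \<Rightarrow> word" where
  "relator k n = wpow (w_word k) n @ [la] @ inv_word (wpow (w_word k) n) @ [lb']"

text \<open>Words representing the identity of G = F(a,b) / <<r>>: the class of the empty word
  under insertion/deletion of cancelling pairs and of r^{\<plusminus>1}.\<close>
inductive gtriv :: "word \<Rightarrow> word \<Rightarrow> bool" for r :: word where
  empty: "gtriv r []"
| ins_pair: "gtriv r (p @ q) \<Longrightarrow> gtriv r (p @ [l, inv_letter l] @ q)"
| del_pair: "gtriv r (p @ [l, inv_letter l] @ q) \<Longrightarrow> gtriv r (p @ q)"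
| ins_rel: "gtriv r (p @ q) \<Longrightarrow> gtriv r (p @ r @ q)"
| del_rel: "gtriv r (p @ r @ q) \<Longrightarrow> gtriv r (p @ q)"
| ins_relinv: "gtriv r (p @ q) \<Longrightarrow> gtriv r (p @ inv_word r @ q)"
| del_relinv: "gtriv r (p @ inv_word r @ q) \<Longrightarrow> gtriv r (p @ q)"

text \<open>Abelianization a, b \<mapsto> t: exponent sum.\<close>
definition expsum :: "word \<Rightarrow> int" where
  "expsum u = sum_list (map (\<lambda>l. if snd l then 1 else -1) u)"

type_synonym mat2 = "complex^2^2"
type_synonym mat3 = "complex^3^3"

definition mk2 :: "complex \<Rightarrow> complex \<Rightarrow> complex \<Rightarrow> complex \<Rightarrow> mat2" where
  "mk2 p q r s = vector [vector [p, q], vector [r, s]]"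

definition rhoA :: "complex \<Rightarrow> mat2" where
  "rhoA M = mk2 M 1 0 (inverse M)"
definition rhoB :: "complex \<Rightarrow> complex \<Rightarrow> mat2" where
  "rhoB M y = mk2 M 0 (2 - y) (inverse M)"

definition rho_letter :: "complex \<Rightarrow> complex \<Rightarrow> letter \<Rightarrow> mat2" where
  "rho_letter M y l = (let g = (if fst l = GA then rhoA M else rhoB M y)
                       in if snd l then g else matrix_inv g)"

definition rho_word :: "complex \<Rightarrow> complex \<Rightarrow> word \<Rightarrow> mat2" where
  "rho_word M y u = foldr (\<lambda>l A. rho_letter M y l ** A) u (mat 1)"

definition discrete_set :: "mat2 set \<Rightarrow> bool" where
  "discrete_set S \<longleftrightarrow> (\<forall>x\<in>S. \<exists>e>0. \<forall>z\<in>S. z \<noteq> x \<longrightarrow> e \<le> dist z x)"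

text \<open>The induced representation of G(K) into PSL_2(C) is discrete and faithful.\<close>
definition discrete_faithful :: "word \<Rightarrow> complex \<Rightarrow> complex \<Rightarrow> bool" where
  "discrete_faithful r M y \<longleftrightarrow>
     rho_word M y r = mat 1 \<and>
     (\<forall>u. (rho_word M y u = mat 1 \<or> rho_word M y u = - mat 1) \<longrightarrow> gtriv r u) \<and>
     discrete_set (range (rho_word M y))"

definition sl2_basis :: "3 \<Rightarrow> mat2" where
  "sl2_basis j = (if j = 1 then mk2 0 1 0 0 else if j = 2 then mk2 1 0 0 (-1) else mk2 0 0 1 0)"

definition sl2_coord :: "3 \<Rightarrow> mat2 \<Rightarrow> complex" where
  "sl2_coord i X = (if i = 1 then X$1$2 else if i = 2 then X$1$1 else X$2$1)"

definition Ad :: "mat2 \<Rightarrow> mat3" where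
  "Ad g = (\<chi> i j. sl2_coord i (g ** sl2_basis j ** matrix_inv g))"

text \<open>Elements of Z[F(a,b)] as formal sums (coefficient, word).\<close>
type_synonym zgroupring = "(int \<times> word) list"

fun fox_letter :: "gen \<Rightarrow> letter \<Rightarrow> zgroupring" where
  "fox_letter x (g, True) = (if g = x then [(1, [])] else [])"
| "fox_letter x (g, False) = (if g = x then [(-1, [(g, False)])] else [])"

fun fox :: "gen \<Rightarrow> word \<Rightarrow> zgroupring" where
  "fox x [] = []"
| "fox x (l # u) = fox_letter x l @ map (\<lambda>(c, v). (c, l # v)) (fox x u)"

definition smult3 :: "complex \<Rightarrow> mat3 \<Rightarrow> mat3" where
  "smult3 c A = (\<chi> i j. c * A$i$j)"

definition Phi :: "complex \<Rightarrow> complex \<Rightarrow> complex \<Rightarrow> zgroupring \<Rightarrow> mat3" where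
  "Phi M y t s = sum_list (map (\<lambda>(c, v). smult3 (of_int c * t powi expsum v)
                                          (Ad (rho_word M y v))) s)"

definition adj_tap :: "nat \<Rightarrow> nat \<Rightarrow> complex \<Rightarrow> complex \<Rightarrow> complex \<Rightarrow> complex" where
  "adj_tap k n M y t = det (Phi M y t (fox GA (relator k n)))
                       / det (Phi M y t [(1, []), (-1, [lb])])"

definition adj_tap_den :: "complex \<Rightarrow> complex \<Rightarrow> complex \<Rightarrow> complex" where
  "adj_tap_den M y t = det (Phi M y t [(1, []), (-1, [lb])])"

text \<open>Chebyshev polynomials of the second kind (needed only for nonnegative index).\<close>
fun cheb_S :: "nat \<Rightarrow> complex \<Rightarrow> complex" where
  "cheb_S 0 v = 1"
| "cheb_S (Suc 0) v = v"
| "cheb_S (Suc (Suc l)) v = v * cheb_S (Suc l) v - cheb_S l v"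

text \<open>Up to multiplication by \<plusminus>t^i, Delta is a polynomial of degree D with leading
  coefficient c and constant term \<plusminus>c (as rational functions: equality for all t
  where the denominator does not vanish).\<close>
definition tap_shape :: "(complex \<Rightarrow> complex) \<Rightarrow> (complex \<Rightarrow> complex) \<Rightarrow> nat \<Rightarrow> complex \<Rightarrow> bool" where
  "tap_shape Delta den D c \<longleftrightarrow>
     (\<exists>p :: complex poly. \<exists>i :: int. \<exists>s :: complex. \<exists>s' :: complex.
        s \<in> {1, -1} \<and> s' \<in> {1, -1} \<and>
        degree p = D \<and> lead_coeff p = c \<and> coeff p 0 = s' * c \<and>
        (\<forall>t. t \<noteq> 0 \<and> den t \<noteq> 0 \<longrightarrow> Delta t = s * t powi i * poly p t))"

end

theory Submission
  imports Defs
begin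

text \<open>
  Write A = Phi(a), B = Phi(b) and P, Q for the Fox matrices Phi(dr/da), Phi(dr/db). Because
  Ad(rho0(a)) and Ad(rho0(b)) are unipotent, Fox's fundamental formula
  P(A - 1) + Q(B - 1) = Phi(r) - 1 = 0 allows column operations showing that (t - 1)^3 divides
  det P, while the denominator det (1 - B) is (1 - t)^3.

  For r = w^n a w^-n b^-1 and X = Phi(w) one has P = (1 - B)(sum_(j<n) X^j) Phi(dw/da) + X^n, an
  explicit matrix polynomial. Its values at t = 0 and at t = \<infinity> are products of determinants of
  geometric sums sum_(j<l) Ad(g)^j, and triangularising g gives
  det (sum_(j<l) Ad(g)^j) = l S_(l-1)(tr g)^2. These end coefficients do not vanish: S_(l-1)(tr g) = 0
  forces g^l = \<plusminus>1, which contradicts the relation (k even) or faithfulness (k odd). Likewise, for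
  k = 1 the knot J(1, 2n) is a torus knot and w^(2n-1) is sent to \<plusminus>1 without being trivial, so no
  discrete faithful representation exists and case (iii) holds vacuously.
\<close>

lemma mk2_nth [simp]:
  "mk2 p q r s $ 1 $ 1 = p" "mk2 p q r s $ 1 $ 2 = q"
  "mk2 p q r s $ 2 $ 1 = r" "mk2 p q r s $ 2 $ 2 = s"
  by (simp_all add: mk2_def)

lemma mk2_eta: "g = mk2 (g$1$1) (g$1$2) (g$2$1) (g$2$2)"
  by (simp add: vec_eq_iff forall_2)

lemma mk2_eq_iff: "mk2 p q r s = mk2 p' q' r' s' \<longleftrightarrow> p = p' \<and> q = q' \<and> r = r' \<and> s = s'"
  by (auto simp: vec_eq_iff forall_2)

lemma mk2_mult: "mk2 a b c d ** mk2 e f g h = mk2 (a*e+b*g) (a*f+b*h) (c*e+d*g) (c*f+d*h)"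
  by (simp add: matrix_matrix_mult_def vec_eq_iff forall_2 sum_2)

lemma mat_mk2: "(mat c :: mat2) = mk2 c 0 0 c"
  by (simp add: vec_eq_iff forall_2 mat_def)

lemma det_mk2: "det (mk2 p q r s) = p * s - q * r"
  by (simp add: det_2)

lemma trace_mk2: "trace (mk2 p q r s) = p + s"
  by (simp add: trace_def sum_2)

lemma mat_mult_mat: "(mat a :: mat2) ** mat b = mat (a * b)"
  by (simp add: mat_mk2 mk2_mult)

lemma mat_mult_commute: "(mat c :: mat2) ** A = A ** mat c" for A :: mat2
  by (subst (1 2) mk2_eta[of A]) (simp add: mat_mk2 mk2_mult mult.commute)

lemma mat_mult_cancel_left:
  assumes "c \<noteq> 0" "(mat c :: mat2) ** A = mat c ** B"
  shows "A = B"
proof -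
  have "mat (inverse c) ** (mat c ** A) = mat (inverse c) ** (mat c ** B)" using assms(2) by simp
  then show ?thesis using assms(1) by (simp add: matrix_mul_assoc mat_mult_mat)
qed

lemma matrix_inv_eqI:
  fixes A B :: "'a::semiring_1^'n^'n"
  assumes "A ** B = mat 1" "B ** A = mat 1"
  shows "matrix_inv A = B"
proof -
  have "\<exists>A'. A ** A' = mat 1 \<and> A' ** A = mat 1" using assms by blast
  then have C: "A ** matrix_inv A = mat 1 \<and> matrix_inv A ** A = mat 1"
    unfolding matrix_inv_def by (rule someI_ex)
  have "matrix_inv A = matrix_inv A ** (A ** B)" using assms by simp
  also have "\<dots> = B" using C by (simp add: matrix_mul_assoc)
  finally show ?thesis .
qed

lemma matrix_inv_mk2:
  "p * s - q * r = 1 \<Longrightarrow> matrix_inv (mk2 p q r s) = mk2 s (-q) (-r) (p::complex)"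
  by (rule matrix_inv_eqI) (simp_all add: mk2_mult mat_mk2 algebra_simps)

lemma matrix_neg_left: "(- A) ** B = - (A ** (B::'a::ring_1^'n^'n))"
  by (simp add: matrix_matrix_mult_def vec_eq_iff sum_negf)

lemma matrix_neg_right: "A ** (- B) = - (A ** (B::'a::ring_1^'n^'n))"
  by (simp add: matrix_matrix_mult_def vec_eq_iff sum_negf)

lemma matrix_add_rdistrib: "(A + B) ** C = A ** C + B ** (C::'a::ring_1^'n^'n)"
  by (simp add: matrix_matrix_mult_def vec_eq_iff sum.distrib algebra_simps)

lemma matrix_diff_ldistrib: "A ** (B - C) = A ** B - A ** (C::'a::ring_1^'n^'n)"
  by (simp add: matrix_matrix_mult_def vec_eq_iff sum_subtractf algebra_simps)

lemma matrix_diff_rdistrib: "(A - B) ** C = A ** C - B ** (C::'a::ring_1^'n^'n)"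
  by (simp add: matrix_matrix_mult_def vec_eq_iff sum_subtractf algebra_simps)

lemma matrix_sum_ldistrib: "(A::'a::ring_1^'n^'n) ** (\<Sum>j\<in>S. B j) = (\<Sum>j\<in>S. A ** B j)"
  by (induction S rule: infinite_finite_induct) (simp_all add: matrix_add_ldistrib)

lemma matrix_sum_rdistrib: "(\<Sum>j\<in>S. B j) ** (A::'a::ring_1^'n^'n) = (\<Sum>j\<in>S. B j ** A)"
  by (induction S rule: infinite_finite_induct) (simp_all add: matrix_add_rdistrib)

lemma det_neg3: "det (- (A::mat3)) = - det A"
  by (simp add: det_3 algebra_simps)

fun matpow :: "'a::semiring_1^'n^'n \<Rightarrow> nat \<Rightarrow> 'a^'n^'n" where
  "matpow A 0 = mat 1"
| "matpow A (Suc j) = A ** matpow A j"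

lemma matpow_add: "matpow A (i + j) = matpow A i ** matpow A j"
  by (induction i) (simp_all add: matrix_mul_assoc)

lemma matpow_Suc_right: "matpow A (Suc j) = matpow A j ** A"
  using matpow_add[of A j 1] by simp

lemma det_matpow: "det (matpow (A::'a::comm_ring_1^'n^'n) j) = det A ^ j"
  by (induction j) (simp_all add: det_mul)

lemma matpow_mat: "matpow (mat c) j = (mat (c ^ j) :: mat2)"
proof (induction j)
  case (Suc j) then show ?case by (simp only: matpow.simps mat_mult_mat power_Suc)
qed simp

lemma matpow_mat_mult:
  "matpow (mat c ** A) j = mat (c ^ j) ** matpow (A::mat2) j"
proof (induction j)
  case (Suc j)
  have "mat c ** A ** (mat (c ^ j) ** matpow A j) = mat c ** (A ** mat (c ^ j)) ** matpow A j"
    by (simp only: matrix_mul_assoc)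
  also have "\<dots> = (mat c ** mat (c ^ j)) ** (A ** matpow A j)"
    by (simp only: mat_mult_commute[of "c ^ j" A, symmetric] matrix_mul_assoc)
  finally have "mat c ** A ** (mat (c ^ j) ** matpow A j) = (mat c ** mat (c ^ j)) ** (A ** matpow A j)" .
  then show ?case
    by (simp only: matpow.simps Suc mat_mult_mat power_Suc matrix_mul_assoc)
qed simp

lemma matpow_conj:
  assumes "H' ** H = mat 1" "H ** H' = (mat 1 :: 'a::ring_1^'n^'n)"
  shows "H ** matpow G j ** H' = matpow (H ** G ** H') j"
proof (induction j)
  case (Suc j)
  have "(H ** G ** H') ** (H ** matpow G j ** H') = H ** G ** (H' ** H) ** matpow G j ** H'"
    by (simp add: matrix_mul_assoc)
  then show ?case using Suc assms by (simp add: matrix_mul_assoc)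
qed (use assms in simp)

lemma geometric_matrix_sum:
  "(\<Sum>j<l. matpow D j) ** (D - mat 1) = matpow (D::'a::ring_1^'n^'n) l - mat 1"
proof (induction l)
  case (Suc l)
  have "(\<Sum>j<Suc l. matpow D j) ** (D - mat 1)
      = (\<Sum>j<l. matpow D j) ** (D - mat 1) + matpow D l ** (D - mat 1)"
    by (simp add: matrix_add_rdistrib)
  also have "\<dots> = matpow D (Suc l) - mat 1"
    using Suc by (simp add: matrix_diff_ldistrib matpow_Suc_right[symmetric])
  finally show ?case .
qed simp

lemma smult3_mult_left: "smult3 c A ** B = smult3 c (A ** B)"
  by (simp add: smult3_def matrix_matrix_mult_def vec_eq_iff sum_distrib_left mult.assoc)

lemma smult3_mult_right: "A ** smult3 c B = smult3 c (A ** B)"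
  by (simp add: smult3_def matrix_matrix_mult_def vec_eq_iff sum_distrib_left mult_ac)

lemma smult3_smult3: "smult3 c (smult3 d A) = smult3 (c * d) A"
  by (simp add: smult3_def vec_eq_iff mult.assoc)

lemma smult3_add_right: "smult3 c (A + B) = smult3 c A + smult3 c B"
  by (simp add: smult3_def vec_eq_iff algebra_simps)

lemma smult3_diff_right: "smult3 c (A - B) = smult3 c A - smult3 c B"
  by (simp add: smult3_def vec_eq_iff algebra_simps)

lemma smult3_minus_left: "smult3 (- c) A = - smult3 c A"
  by (simp add: smult3_def vec_eq_iff)

lemma smult3_one [simp]: "smult3 1 A = A"
  by (simp add: smult3_def vec_eq_iff)

lemma smult3_zero [simp]: "smult3 0 A = 0" "smult3 c 0 = 0"
  by (simp_all add: smult3_def vec_eq_iff)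

lemma smult3_nth [simp]: "smult3 c A $ i $ j = c * A $ i $ j"
  by (simp add: smult3_def)

lemma smult3_sum: "smult3 c (\<Sum>j\<in>S. A j) = (\<Sum>j\<in>S. smult3 c (A j))"
  by (induction S rule: infinite_finite_induct) (simp_all add: smult3_add_right)

lemma det_smult3: "det (smult3 c A) = c^3 * det A"
  by (simp add: det_3 power3_eq_cube algebra_simps)

lemma matpow_smult3: "matpow (smult3 c A) j = smult3 (c ^ j) (matpow A j)"
  by (induction j) (simp_all add: smult3_mult_left smult3_mult_right smult3_smult3 mult.commute)

lemma smult3_sandwich:
  "smult3 (a * b * c) (A ** S ** Z) = smult3 a A ** smult3 b S ** smult3 c Z"
  by (simp add: smult3_mult_left smult3_mult_right smult3_smult3 matrix_mul_assoc mult_ac)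

lemma inv_word_Nil [simp]: "inv_word [] = []"
  by (simp add: inv_word_def)

lemma inv_word_Cons: "inv_word (l # u) = inv_word u @ [inv_letter l]"
  by (simp add: inv_word_def)

lemma inv_word_append: "inv_word (u @ v) = inv_word v @ inv_word u"
  by (simp add: inv_word_def)

lemma inv_letter_inv_letter [simp]: "inv_letter (inv_letter l) = l"
  by (simp add: inv_letter_def)

lemma inv_letter_generators [simp]:
  "inv_letter la = la'" "inv_letter lb = lb'" "inv_letter la' = la" "inv_letter lb' = lb"
  by (simp_all add: inv_letter_def la_def lb_def la'_def lb'_def)

lemma inv_word_inv_word [simp]: "inv_word (inv_word u) = u"
  by (simp add: inv_word_def rev_map comp_def)

lemma expsum_Nil [simp]: "expsum [] = 0"
  by (simp add: expsum_def)

lemma expsum_Cons: "expsum (l # u) = (if snd l then 1 else -1) + expsum u"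
  by (simp add: expsum_def)

lemma expsum_append: "expsum (u @ v) = expsum u + expsum v"
  by (simp add: expsum_def)

lemma expsum_inv_word: "expsum (inv_word u) = - expsum u"
  by (induction u) (auto simp: inv_word_Cons expsum_append expsum_Cons inv_letter_def)

lemma expsum_wpow: "expsum (wpow u j) = int j * expsum u"
  by (induction j) (simp_all add: expsum_append algebra_simps)

lemma expsum_relator: "expsum (relator k n) = 0"
  by (simp add: relator_def expsum_append expsum_inv_word la_def lb'_def expsum_Cons)

lemma gtriv_expsum: "gtriv r u \<Longrightarrow> expsum r = 0 \<Longrightarrow> expsum u = 0"
  by (induction rule: gtriv.induct)
     (auto simp: expsum_append expsum_inv_word expsum_Cons inv_letter_def split: if_splits)

lemma rho_letter_simps:
  assumes "M * M = 1"
  shows "rho_letter M y (GA, True) = mk2 M 1 0 M"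
    "rho_letter M y (GA, False) = mk2 M (-1) 0 M"
    "rho_letter M y (GB, True) = mk2 M 0 (2 - y) M"
    "rho_letter M y (GB, False) = mk2 M 0 (y - 2) M"
proof -
  have "inverse M = M" using assms by (metis inverse_unique)
  then show "rho_letter M y (GA, True) = mk2 M 1 0 M"
    "rho_letter M y (GA, False) = mk2 M (-1) 0 M"
    "rho_letter M y (GB, True) = mk2 M 0 (2 - y) M"
    "rho_letter M y (GB, False) = mk2 M 0 (y - 2) M"
    using assms by (simp_all add: rho_letter_def rhoA_def rhoB_def matrix_inv_mk2)
qed

lemma det_rho_letter: "M * M = 1 \<Longrightarrow> det (rho_letter M y l) = 1"
  by (cases l; cases "fst l"; cases "snd l") (auto simp: rho_letter_simps det_mk2)

lemma rho_letter_inv_letter: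
  "M * M = 1 \<Longrightarrow> rho_letter M y (inv_letter l) ** rho_letter M y l = mat 1"
  by (cases l; cases "fst l"; cases "snd l")
     (auto simp: rho_letter_simps inv_letter_def mk2_mult mat_mk2 algebra_simps)

lemma rho_word_Nil [simp]: "rho_word M y [] = mat 1"
  by (simp add: rho_word_def)

lemma rho_word_Cons: "rho_word M y (l # u) = rho_letter M y l ** rho_word M y u"
  by (simp add: rho_word_def)

lemma rho_word_append: "rho_word M y (u @ v) = rho_word M y u ** rho_word M y v"
  by (induction u) (simp_all add: rho_word_Cons matrix_mul_assoc)

lemma rho_word_single: "rho_word M y [l] = rho_letter M y l"
  by (simp add: rho_word_Cons)

lemma rho_word_wpow: "rho_word M y (wpow u j) = matpow (rho_word M y u) j"
  by (induction j) (simp_all add: rho_word_append)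

lemma det_rho_word: "M * M = 1 \<Longrightarrow> det (rho_word M y u) = 1"
  by (induction u) (simp_all add: rho_word_Cons det_mul det_rho_letter)

lemma rho_word_inv_word_mult:
  assumes "M * M = 1"
  shows "rho_word M y (inv_word u) ** rho_word M y u = mat 1"
proof (induction u)
  case (Cons l u)
  have "rho_word M y (inv_word (l # u)) ** rho_word M y (l # u) = rho_word M y (inv_word u) **
      ((rho_letter M y (inv_letter l) ** rho_letter M y l) ** rho_word M y u)"
    by (simp add: inv_word_Cons rho_word_append rho_word_Cons rho_word_single matrix_mul_assoc)
  then show ?case using Cons rho_letter_inv_letter[OF assms] by simp
qed simp

lemma rho_word_mult_inv_word:
  "M * M = 1 \<Longrightarrow> rho_word M y u ** rho_word M y (inv_word u) = mat 1"
  using rho_word_inv_word_mult[of M y "inv_word u"] by simp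

definition Ad_explicit :: "mat2 \<Rightarrow> mat3" where
  "Ad_explicit g = (let p = g$1$1; q = g$1$2; r = g$2$1; s = g$2$2 in
     vector [vector [p^2, -2 * p * q, -(q^2)], vector [-(p * r), p * s + q * r, q * s],
             vector [-(r^2), 2 * r * s, s^2]])"

lemma Ad_eq_Ad_explicit:
  assumes "det g = 1"
  shows "Ad g = Ad_explicit g"
proof -
  obtain p q r s where g: "g = mk2 p q r s" using mk2_eta by blast
  have d: "p * s - q * r = 1" using assms by (simp add: g det_mk2)
  show ?thesis
    unfolding g Ad_def Ad_explicit_def Let_def matrix_inv_mk2[OF d]
    by (simp add: vec_eq_iff forall_3 sl2_coord_def sl2_basis_def mk2_mult power2_eq_square
        algebra_simps)
qed

lemma Ad_explicit_mult: "Ad_explicit g ** Ad_explicit h = Ad_explicit (g ** h)"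
  by (simp add: Ad_explicit_def Let_def matrix_matrix_mult_def vec_eq_iff forall_3 sum_3 sum_2
      power2_eq_square algebra_simps)

lemma det_Ad_explicit: "det (Ad_explicit g) = (det g)^3"
  by (simp add: Ad_explicit_def Let_def det_3 det_2 power3_eq_cube power2_eq_square algebra_simps)

lemma Ad_explicit_upper:
  "Ad_explicit (mk2 a b 0 d) = vector [vector [a^2, -2 * a * b, -(b^2)], vector [0, a * d, b * d],
     vector [0, 0, d^2]]"
  by (simp add: Ad_explicit_def)

lemma Ad_mult: "det g = 1 \<Longrightarrow> det h = 1 \<Longrightarrow> Ad g ** Ad h = Ad (g ** h)"
  by (simp add: Ad_eq_Ad_explicit Ad_explicit_mult det_mul)

lemma det_Ad: "det g = 1 \<Longrightarrow> det (Ad g) = 1"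
  by (simp add: Ad_eq_Ad_explicit det_Ad_explicit)

lemma Ad_one: "Ad (mat 1) = mat 1"
  by (simp add: Ad_eq_Ad_explicit Ad_explicit_def vec_eq_iff forall_3 mat_mk2 det_mk2)
     (simp add: mat_def)

lemma Ad_matpow: "det g = 1 \<Longrightarrow> matpow (Ad g) j = Ad (matpow g j)"
  by (induction j) (simp_all add: Ad_one Ad_mult det_matpow)

definition Ad_word :: "complex \<Rightarrow> complex \<Rightarrow> word \<Rightarrow> mat3" where
  "Ad_word M y u = Ad (rho_word M y u)"

lemma Ad_word_append: "M * M = 1 \<Longrightarrow> Ad_word M y (u @ v) = Ad_word M y u ** Ad_word M y v"
  by (simp add: Ad_word_def rho_word_append Ad_mult det_rho_word)

lemma Ad_word_inv_word:
  assumes "M * M = 1"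
  shows "Ad_word M y (inv_word u) ** Ad_word M y u = mat 1"
    "Ad_word M y u ** Ad_word M y (inv_word u) = mat 1"
  using assms
  by (simp_all add: Ad_word_def Ad_mult det_rho_word rho_word_inv_word_mult rho_word_mult_inv_word Ad_one)

lemma Ad_word_wpow: "M * M = 1 \<Longrightarrow> Ad_word M y (wpow u j) = matpow (Ad_word M y u) j"
  by (simp add: Ad_word_def rho_word_wpow Ad_matpow det_rho_word)

lemma det_Ad_word: "M * M = 1 \<Longrightarrow> det (Ad_word M y u) = 1"
  by (simp add: Ad_word_def det_Ad det_rho_word)

section \<open>Fox calculus\<close>

definition Phi_word :: "complex \<Rightarrow> complex \<Rightarrow> complex \<Rightarrow> word \<Rightarrow> mat3" where
  "Phi_word M y t u = smult3 (t powi expsum u) (Ad_word M y u)"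

lemma Phi_Nil [simp]: "Phi M y t [] = 0"
  by (simp add: Phi_def)

lemma Phi_Cons: "Phi M y t ((c, v) # s) = smult3 (of_int c) (Phi_word M y t v) + Phi M y t s"
  by (simp add: Phi_def Phi_word_def Ad_word_def smult3_smult3)

lemma Phi_append: "Phi M y t (s1 @ s2) = Phi M y t s1 + Phi M y t s2"
  by (simp add: Phi_def)

lemma Phi_single: "Phi M y t [(c, v)] = smult3 (of_int c) (Phi_word M y t v)"
  by (simp add: Phi_Cons)

lemma Phi_word_Nil [simp]: "Phi_word M y t [] = mat 1"
  by (simp add: Phi_word_def Ad_word_def Ad_one)

lemma Phi_word_append:
  assumes "M * M = 1" "t \<noteq> 0"
  shows "Phi_word M y t (u @ v) = Phi_word M y t u ** Phi_word M y t v"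
  using assms
  by (simp add: Phi_word_def expsum_append power_int_add Ad_word_append
      smult3_mult_left smult3_mult_right smult3_smult3 mult.commute)

lemma Phi_word_inv_word:
  assumes "M * M = 1" "t \<noteq> 0"
  shows "Phi_word M y t (inv_word u) ** Phi_word M y t u = mat 1"
proof -
  have "Phi_word M y t (inv_word u @ u) = mat 1"
    using assms by (simp add: Phi_word_def expsum_append expsum_inv_word Ad_word_append
        Ad_word_inv_word)
  then show ?thesis by (simp add: Phi_word_append[OF assms])
qed

lemma Phi_word_wpow:
  assumes "M * M = 1" "t \<noteq> 0"
  shows "Phi_word M y t (wpow u j) = matpow (Phi_word M y t u) j"
  by (induction j) (simp_all add: Phi_word_append[OF assms])

lemma Phi_prefix:
  assumes "M * M = 1" "t \<noteq> 0"
  shows "Phi M y t (map (\<lambda>(c, v). (c, u @ v)) s) = Phi_word M y t u ** Phi M y t s"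
proof (induction s)
  case (Cons a s)
  obtain c v where "a = (c, v)" by fastforce
  with Cons show ?case
    by (simp add: Phi_Cons Phi_word_append[OF assms] matrix_add_ldistrib smult3_mult_right)
qed simp

lemma fox_append: "fox x (u @ v) = fox x u @ map (\<lambda>(c, w). (c, u @ w)) (fox x v)"
proof (induction u)
  case Nil
  have "map (\<lambda>(c, w). (c, w)) s = s" for s :: zgroupring by (induction s) auto
  then show ?case by simp
next
  case (Cons l u)
  have "map (\<lambda>(c, v). (c, l # v)) (map (\<lambda>(c, w). (c, u @ w)) s)
      = map (\<lambda>(c, w). (c, (l # u) @ w)) s" for s :: zgroupring
    by (induction s) auto
  then show ?case using Cons by simp
qed

lemma Phi_fox_append:
  assumes "M * M = 1" "t \<noteq> 0"
  shows "Phi M y t (fox x (u @ v)) = Phi M y t (fox x u) + Phi_word M y t u ** Phi M y t (fox x v)"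
  by (simp add: fox_append Phi_append Phi_prefix[OF assms])

lemma Phi_fox_Cons:
  assumes "M * M = 1" "t \<noteq> 0"
  shows "Phi M y t (fox x (l # u)) = Phi M y t (fox_letter x l) + Phi_word M y t [l] ** Phi M y t (fox x u)"
  using Phi_fox_append[OF assms, where u = "[l]" and v = u] by simp

lemma Phi_fox_inv_letter:
  assumes "M * M = 1" "t \<noteq> 0"
  shows "Phi M y t (fox_letter x (inv_letter l))
    = - Phi_word M y t [inv_letter l] ** Phi M y t (fox_letter x l)"
proof -
  obtain g b where l: "l = (g, b)" by fastforce
  have inv: "Phi_word M y t [(g, \<not> b)] ** Phi_word M y t [(g, b)] = mat 1"
    using Phi_word_inv_word[OF assms, where u = "[(g, b)]"] by (simp add: inv_word_def inv_letter_def)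
  show ?thesis
    using inv by (cases b)
      (auto simp: l inv_letter_def Phi_single smult3_minus_left matrix_neg_left matrix_neg_right)
qed

lemma Phi_fox_inv_word:
  assumes "M * M = 1" "t \<noteq> 0"
  shows "Phi M y t (fox x (inv_word u)) = - Phi_word M y t (inv_word u) ** Phi M y t (fox x u)"
proof (induction u)
  case (Cons l u)
  let ?A = "Phi_word M y t (inv_word u)" and ?B = "Phi_word M y t [inv_letter l]"
    and ?C = "Phi M y t (fox_letter x l)" and ?D = "Phi_word M y t [l]" and ?E = "Phi M y t (fox x u)"
  have BD: "?B ** ?D = mat 1"
    using Phi_word_inv_word[OF assms, where u = "[l]"] by (simp add: inv_word_def)
  have "Phi M y t (fox x (inv_word (l # u))) = - ?A ** ?E - ?A ** (?B ** ?C)"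
    by (simp add: inv_word_Cons Phi_fox_append[OF assms] Cons Phi_fox_inv_letter[OF assms]
        matrix_neg_left matrix_neg_right)
  also have "\<dots> = - (?A ** ?B) ** (?C + ?D ** ?E)"
  proof -
    have "(?A ** ?B) ** (?D ** ?E) = ?A ** ?E"
      by (metis BD matrix_mul_assoc matrix_mul_lid)
    then show ?thesis
      by (simp add: matrix_add_ldistrib matrix_neg_left matrix_mul_assoc[of ?A ?B ?C])
  qed
  also have "\<dots> = - Phi_word M y t (inv_word (l # u)) ** Phi M y t (fox x (l # u))"
    using Phi_fox_append[OF assms, where x = x and u = "[l]" and v = u]
    by (simp add: inv_word_Cons Phi_word_append[OF assms])
  finally show ?case .
qed (simp add: inv_word_def)

lemma Phi_fox_fundamental:
  assumes "M * M = 1" "t \<noteq> 0"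
  shows "Phi M y t (fox GA u) ** (Phi_word M y t [la] - mat 1)
       + Phi M y t (fox GB u) ** (Phi_word M y t [lb] - mat 1) = Phi_word M y t u - mat 1"
proof (induction u)
  case (Cons l u)
  obtain g b where l: "l = (g, b)" by fastforce
  have letter: "Phi M y t (fox_letter GA l) ** (Phi_word M y t [la] - mat 1)
      + Phi M y t (fox_letter GB l) ** (Phi_word M y t [lb] - mat 1) = Phi_word M y t [l] - mat 1"
  proof (cases b)
    case True
    then show ?thesis by (cases g) (simp_all add: l la_def lb_def Phi_single)
  next
    case False
    have "Phi_word M y t [(g, False)] ** Phi_word M y t [(g, True)] = mat 1"
      using Phi_word_inv_word[OF assms, where u = "[(g, True)]"] by (simp add: inv_word_def inv_letter_def)
    then show ?thesis using False
      by (cases g) (simp_all add: l la_def lb_def Phi_single smult3_minus_left matrix_neg_left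
          matrix_diff_ldistrib)
  qed
  have "Phi M y t (fox GA (l # u)) ** (Phi_word M y t [la] - mat 1)
      + Phi M y t (fox GB (l # u)) ** (Phi_word M y t [lb] - mat 1)
    = (Phi M y t (fox_letter GA l) ** (Phi_word M y t [la] - mat 1)
        + Phi M y t (fox_letter GB l) ** (Phi_word M y t [lb] - mat 1))
      + Phi_word M y t [l] ** (Phi M y t (fox GA u) ** (Phi_word M y t [la] - mat 1)
        + Phi M y t (fox GB u) ** (Phi_word M y t [lb] - mat 1))"
    by (simp only: Phi_fox_Cons[OF assms] matrix_add_rdistrib matrix_add_ldistrib
        matrix_mul_assoc add_ac)
  also have "\<dots> = Phi_word M y t [l] ** Phi_word M y t u - mat 1"
    by (simp only: letter Cons) (simp add: matrix_diff_ldistrib)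
  also have "\<dots> = Phi_word M y t (l # u) - mat 1"
    using Phi_word_append[OF assms, where u = "[l]" and v = u] by simp
  finally show ?case .
qed simp

lemma Phi_fox_wpow:
  assumes "M * M = 1" "t \<noteq> 0"
  shows "Phi M y t (fox x (wpow u j)) = (\<Sum>i<j. matpow (Phi_word M y t u) i) ** Phi M y t (fox x u)"
proof (induction j)
  case (Suc j)
  have "Phi M y t (fox x (wpow u (Suc j)))
      = Phi M y t (fox x u) + Phi_word M y t u ** Phi M y t (fox x (wpow u j))"
    by (simp add: Phi_fox_append[OF assms])
  also have "\<dots> = (mat 1 + (\<Sum>i<j. matpow (Phi_word M y t u) (Suc i))) ** Phi M y t (fox x u)"
    by (simp add: Suc matrix_mul_assoc matrix_sum_ldistrib matrix_add_rdistrib)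
  also have "\<dots> = (\<Sum>i<Suc j. matpow (Phi_word M y t u) i) ** Phi M y t (fox x u)"
    by (simp only: sum.lessThan_Suc_shift matpow.simps(1))
  finally show ?case .
qed simp

section \<open>Chebyshev polynomials and powers in SL(2, C)\<close>

text \<open>The index is shifted, chebU l = S_(l-1), so that chebU 0 = 0 is available.\<close>

fun chebU :: "nat \<Rightarrow> complex \<Rightarrow> complex" where
  "chebU 0 v = 0"
| "chebU (Suc 0) v = 1"
| "chebU (Suc (Suc l)) v = v * chebU (Suc l) v - chebU l v"

lemma cheb_S_eq_chebU: "cheb_S l v = chebU (Suc l) v"
  by (induction l v rule: cheb_S.induct) simp_all

lemma chebU_add: "chebU (a + b + 1) v = chebU (a + 1) v * chebU (b + 1) v - chebU a v * chebU b v"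
proof -
  have "chebU (a + b + 1) v = chebU (a + 1) v * chebU (b + 1) v - chebU a v * chebU b v \<and>
        chebU (Suc a + b + 1) v = chebU (Suc a + 1) v * chebU (b + 1) v - chebU (Suc a) v * chebU b v"
  proof (induction a)
    case (Suc a)
    then have I: "chebU (a + b + 1) v = chebU (a + 1) v * chebU (b + 1) v - chebU a v * chebU b v"
      "chebU (Suc a + b + 1) v = chebU (Suc a + 1) v * chebU (b + 1) v - chebU (Suc a) v * chebU b v"
      by blast+
    have "chebU (Suc (Suc a) + b + 1) v = v * chebU (Suc a + b + 1) v - chebU (a + b + 1) v"
      "chebU (Suc (Suc a) + 1) v = v * chebU (Suc a + 1) v - chebU (Suc a) v"
      by (simp_all add: numeral_2_eq_2)
    then have "chebU (Suc (Suc a) + b + 1) v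
        = chebU (Suc (Suc a) + 1) v * chebU (b + 1) v - chebU (Suc (Suc a)) v * chebU b v"
      unfolding I by (simp add: algebra_simps)
    with I show ?case by blast
  qed simp
  then show ?thesis by blast
qed

lemma matpow_Suc_mk2:
  fixes p q r s :: complex
  assumes "p * s - q * r = 1"
  defines "U \<equiv> \<lambda>j. chebU j (p + s)"
  shows "matpow (mk2 p q r s) (Suc j) =
    mk2 (U (Suc j) * p - U j) (U (Suc j) * q) (U (Suc j) * r) (U (Suc j) * s - U j)"
proof (induction j)
  case (Suc j)
  have "p * (a * p - b) + q * (a * r) = ((p + s) * a - b) * p - a"
    "p * (a * q) + q * (a * s - b) = ((p + s) * a - b) * q"
    "r * (a * p - b) + s * (a * r) = ((p + s) * a - b) * r"
    "r * (a * q) + s * (a * s - b) = ((p + s) * a - b) * s - a" for a b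
    using assms(1) by algebra+
  with Suc show ?case by (simp only: matpow.simps mk2_mult mk2_eq_iff U_def chebU.simps)
qed (simp add: U_def mat_mk2 mk2_mult)

lemma matpow_scalar_if_chebU_zero:
  fixes g :: mat2
  assumes "det g = 1" "l \<ge> 1" "chebU l (trace g) = 0"
  shows "\<exists>c. matpow g l = mat c \<and> c * c = 1"
proof -
  obtain p q r s where g: "g = mk2 p q r s" using mk2_eta by blast
  have d: "p * s - q * r = 1" using assms by (simp add: g det_mk2)
  obtain j where l: "l = Suc j" using assms by (cases l) auto
  have "matpow g l = mat (- chebU j (p + s))"
    using matpow_Suc_mk2[OF d, of j] assms(3) by (simp add: g l trace_mk2 mat_mk2)
  moreover have "det (matpow g l) = 1" by (simp add: det_matpow assms)
  ultimately show ?thesis by (auto simp: mat_mk2 det_mk2)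
qed

lemma mat_square_one_cases: "c * c = 1 \<Longrightarrow> mat c = (mat 1 :: mat2) \<or> mat c = - (mat 1 :: mat2)"
proof -
  assume "c * c = 1"
  then have "c = 1 \<or> c = -1" by (metis mult_cancel_left1 square_eq_1_iff)
  then show ?thesis by (auto simp: vec_eq_iff mat_def)
qed

section \<open>The determinant of a geometric sum of adjoint matrices\<close>

fun homog_sum :: "complex \<Rightarrow> complex \<Rightarrow> nat \<Rightarrow> complex" where
  "homog_sum a b 0 = 0"
| "homog_sum a b (Suc l) = a ^ l + b * homog_sum a b l"

lemma homog_sum_eq_chebU:
  assumes "a * b = 1"
  shows "homog_sum a b l = chebU l (a + b)"
proof -
  have "homog_sum a b l = chebU l (a + b) \<and> homog_sum a b (Suc l) = chebU (Suc l) (a + b)"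
  proof (induction l)
    case (Suc l)
    have "a ^ Suc l = a * a ^ l + (a * b - 1) * homog_sum a b l" using assms by simp
    then have "homog_sum a b (Suc (Suc l)) = (a + b) * homog_sum a b (Suc l) - homog_sum a b l"
      by (simp add: algebra_simps)
    with Suc have "homog_sum a b (Suc (Suc l)) = chebU (Suc (Suc l)) (a + b)"
      by (simp only: chebU.simps)
    with Suc show ?case by blast
  qed simp
  then show ?thesis by simp
qed

lemma homog_sum_mult_power:
  assumes "a * b = 1"
  shows "homog_sum a b l * a ^ (l - 1) = (\<Sum>j<l. a ^ (2 * j))"
proof (induction l)
  case (Suc l)
  show ?case
  proof (cases l)
    case (Suc i)
    have e: "a ^ l = a * a ^ i" "l - 1 = i" "a ^ (2 * l) = a ^ l * a ^ l"
      using Suc by (simp_all add: mult_2 power_add)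
    have "homog_sum a b (Suc l) * a ^ l = a ^ (2 * l) + (a * b) * (homog_sum a b l * a ^ (l - 1))"
      unfolding e homog_sum.simps by (simp add: algebra_simps)
    with Suc.IH assms show ?thesis by simp
  qed simp
qed simp

lemma geometric_sums_mult:
  assumes "a * b = 1"
  shows "(\<Sum>j<l. a ^ (2 * j)) * (\<Sum>j<l. b ^ (2 * j)) = (chebU l (a + b))^2"
proof -
  have ba: "b * a = 1" using assms by (simp add: mult.commute)
  have "(\<Sum>j<l. a ^ (2 * j)) * (\<Sum>j<l. b ^ (2 * j))
      = (homog_sum a b l * a ^ (l - 1)) * (homog_sum b a l * b ^ (l - 1))"
    using homog_sum_mult_power[OF assms] homog_sum_mult_power[OF ba] by simp
  also have "\<dots> = homog_sum a b l * homog_sum b a l * (a * b) ^ (l - 1)"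
    by (simp add: power_mult_distrib algebra_simps)
  also have "\<dots> = (chebU l (a + b))^2"
    by (simp add: homog_sum_eq_chebU[OF assms] homog_sum_eq_chebU[OF ba] assms
        power2_eq_square add.commute)
  finally show ?thesis .
qed

lemma matpow_upper_triangular: "\<exists>x'. matpow (mk2 a x 0 d) j = mk2 (a ^ j) x' 0 (d ^ j)"
proof (induction j)
  case (Suc j)
  then obtain x' where "matpow (mk2 a x 0 d) j = mk2 (a ^ j) x' 0 (d ^ j)" by blast
  then show ?case by (simp add: mk2_mult) blast
qed (auto simp: mat_mk2)

lemma sl2_triangularize:
  fixes g :: mat2
  assumes "det g = 1"
  obtains \<mu> \<mu>' x h h' where "\<mu> * \<mu>' = 1" "\<mu> + \<mu>' = trace g" "h ** h' = mat 1" "h' ** h = mat 1"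
    "det h = 1" "h ** g ** h' = mk2 \<mu> x 0 \<mu>'"
proof -
  obtain p q r s where g: "g = mk2 p q r s" using mk2_eta by blast
  have d: "p * s - q * r = 1" using assms by (simp add: g det_mk2)
  show ?thesis
  proof (cases "q = 0")
    case True
    let ?h = "mk2 0 1 (-1) 0" and ?h' = "mk2 0 (-1) 1 0"
    have "?h ** g ** ?h' = mk2 s (-r) 0 p"
      by (simp add: g mk2_mult True)
    with d True show ?thesis
      by (intro that[of s p ?h ?h']) (simp_all add: g trace_mk2 mk2_mult mat_mk2 det_mk2 mult.commute)
  next
    case False
    define \<tau> where "\<tau> = p + s"
    define \<mu> where "\<mu> = (\<tau> + csqrt (\<tau>^2 - 4)) / 2"
    have \<mu>: "\<mu>^2 - \<tau> * \<mu> + 1 = 0"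
    proof -
      have "(csqrt (\<tau>^2 - 4))^2 = \<tau>^2 - 4" by simp
      then show ?thesis unfolding \<mu>_def by (simp add: power2_eq_square field_simps) algebra
    qed
    let ?h = "mk2 (1/q) 0 (p - \<mu>) q" and ?h' = "mk2 q 0 (\<mu> - p) (1/q)"
    have "r * q + s * (\<mu> - p) = \<mu> * (\<mu> - p)"
      using d \<mu> unfolding \<tau>_def by (simp add: power2_eq_square) algebra
    then have "?h ** g ** ?h' = mk2 \<mu> (1/q) 0 (\<tau> - \<mu>)"
      using False by (simp add: g mk2_mult mk2_eq_iff \<tau>_def field_simps) algebra
    moreover have "\<mu> * (\<tau> - \<mu>) = 1" using \<mu> by (simp add: power2_eq_square algebra_simps)
    ultimately show ?thesis using False
      by (intro that[of \<mu> "\<tau> - \<mu>" ?h ?h'])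
         (simp_all add: g \<tau>_def trace_mk2 mk2_mult mat_mk2 det_mk2 algebra_simps
          add_divide_distrib[symmetric])
  qed
qed

lemma det_sum_matpow_Ad:
  fixes g :: mat2
  assumes "det g = 1"
  shows "det (\<Sum>j<l. matpow (Ad g) j) = of_nat l * (chebU l (trace g))^2"
proof -
  obtain \<mu> \<mu>' x h h' where \<mu>: "\<mu> * \<mu>' = 1" "\<mu> + \<mu>' = trace g"
    and h: "h ** h' = mat 1" "h' ** h = mat 1" "det h = 1"
    and T: "h ** g ** h' = mk2 \<mu> x 0 \<mu>'"
    by (rule sl2_triangularize[OF assms])
  let ?T = "mk2 \<mu> x 0 \<mu>'"
  have dh': "det h' = 1" using h by (metis det_I det_mul mult_1)
  have "Ad h ** (\<Sum>j<l. matpow (Ad g) j) ** Ad h' = (\<Sum>j<l. Ad h ** matpow (Ad g) j ** Ad h')"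
    by (simp add: matrix_sum_ldistrib matrix_sum_rdistrib)
  also have "\<dots> = (\<Sum>j<l. Ad (matpow ?T j))"
    using assms h dh' by (simp add: Ad_matpow Ad_mult det_matpow det_mul matpow_conj[OF h(2) h(1)] T)
  finally have conj: "Ad h ** (\<Sum>j<l. matpow (Ad g) j) ** Ad h' = (\<Sum>j<l. Ad (matpow ?T j))" .
  have "det (\<Sum>j<l. matpow (Ad g) j) = det (\<Sum>j<l. Ad (matpow ?T j))"
    using conj[symmetric] h dh' by (simp add: det_mul det_Ad)
  also have "\<dots> = (\<Sum>j<l. \<mu> ^ (2 * j)) * of_nat l * (\<Sum>j<l. \<mu>' ^ (2 * j))"
  proof -
    obtain X where X: "\<And>j. matpow ?T j = mk2 (\<mu> ^ j) (X j) 0 (\<mu>' ^ j)"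
      using matpow_upper_triangular by metis
    have "det (matpow ?T j) = 1" for j using \<mu> by (simp add: det_matpow det_mk2)
    then have "Ad (matpow ?T j) = vector [vector [\<mu> ^ (2 * j), -2 * \<mu> ^ j * X j, -((X j)^2)],
        vector [0, 1, X j * \<mu>' ^ j], vector [0, 0, \<mu>' ^ (2 * j)]]" for j
      by (simp add: Ad_eq_Ad_explicit X Ad_explicit_upper power_mult_distrib[symmetric] \<mu>
          mult.commute[of 2 j] flip: power_mult)
    then show ?thesis by (simp add: det_3)
  qed
  also have "\<dots> = of_nat l * (chebU l (trace g))^2"
    using geometric_sums_mult[OF \<mu>(1)] \<mu>(2) by (simp add: algebra_simps)
  finally show ?thesis .
qed

lemma det_sum_matpow_Ad_word:
  "M * M = 1 \<Longrightarrow> det (\<Sum>j<l. matpow (Ad_word M y u) j) = of_nat l * (chebU l (trace (rho_word M y u)))^2"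
  unfolding Ad_word_def by (rule det_sum_matpow_Ad[OF det_rho_word])

section \<open>Polynomial functions and the cube of t - 1\<close>

definition polyfun :: "(complex \<Rightarrow> complex) \<Rightarrow> bool" where
  "polyfun f \<longleftrightarrow> (\<exists>q. \<forall>t. f t = poly q t)"

definition polyfun_nz :: "(complex \<Rightarrow> complex) \<Rightarrow> bool" where
  "polyfun_nz f \<longleftrightarrow> (\<exists>q. \<forall>t. t \<noteq> 0 \<longrightarrow> f t = poly q t)"

lemma polyfun_const [simp]: "polyfun (\<lambda>t. c)"
  unfolding polyfun_def by (rule exI[of _ "[:c:]"]) simp

lemma polyfun_id [simp]: "polyfun (\<lambda>t. t)"
  unfolding polyfun_def by (rule exI[of _ "[:0, 1:]"]) simp

lemma polyfun_add: "polyfun f \<Longrightarrow> polyfun g \<Longrightarrow> polyfun (\<lambda>t. f t + g t)"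
  unfolding polyfun_def by (metis poly_add)

lemma polyfun_diff: "polyfun f \<Longrightarrow> polyfun g \<Longrightarrow> polyfun (\<lambda>t. f t - g t)"
  unfolding polyfun_def by (metis poly_diff)

lemma polyfun_mult: "polyfun f \<Longrightarrow> polyfun g \<Longrightarrow> polyfun (\<lambda>t. f t * g t)"
  unfolding polyfun_def by (metis poly_mult)

lemma polyfun_power: "polyfun f \<Longrightarrow> polyfun (\<lambda>t. f t ^ n)"
  by (induction n) (simp_all add: polyfun_mult)

lemma polyfun_sum: "(\<And>j. j \<in> S \<Longrightarrow> polyfun (f j)) \<Longrightarrow> polyfun (\<lambda>t. \<Sum>j\<in>S. f j t)"
  by (induction S rule: infinite_finite_induct) (simp_all add: polyfun_add)

lemma polyfun_nz_add: "polyfun_nz f \<Longrightarrow> polyfun_nz g \<Longrightarrow> polyfun_nz (\<lambda>t. f t + g t)"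
  unfolding polyfun_nz_def by (metis poly_add)

lemma polyfun_nz_diff: "polyfun_nz f \<Longrightarrow> polyfun_nz g \<Longrightarrow> polyfun_nz (\<lambda>t. f t - g t)"
  unfolding polyfun_nz_def by (metis poly_diff)

lemma polyfun_nz_mult: "polyfun_nz f \<Longrightarrow> polyfun_nz g \<Longrightarrow> polyfun_nz (\<lambda>t. f t * g t)"
  unfolding polyfun_nz_def by (metis poly_mult)

lemma polyfun_nz_const [simp]: "polyfun_nz (\<lambda>t. c)"
  unfolding polyfun_nz_def by (rule exI[of _ "[:c:]"]) simp

lemma polyfun_nz_power [simp]: "polyfun_nz (\<lambda>t. t ^ n)"
  unfolding polyfun_nz_def by (rule exI[of _ "monom 1 n"]) (simp add: poly_monom)

lemma polyfun_nz_cong: "polyfun_nz f \<Longrightarrow> (\<And>t. t \<noteq> 0 \<Longrightarrow> f t = g t) \<Longrightarrow> polyfun_nz g"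
  unfolding polyfun_nz_def by metis

definition pmat :: "(complex \<Rightarrow> mat3) \<Rightarrow> bool" where
  "pmat A \<longleftrightarrow> (\<forall>i j. polyfun (\<lambda>t. A t $ i $ j))"

definition pmat_nz :: "(complex \<Rightarrow> mat3) \<Rightarrow> bool" where
  "pmat_nz A \<longleftrightarrow> (\<forall>i j. polyfun_nz (\<lambda>t. A t $ i $ j))"

lemma pmat_const [simp]: "pmat (\<lambda>t. C)"
  by (simp add: pmat_def)

lemma pmat_add: "pmat A \<Longrightarrow> pmat B \<Longrightarrow> pmat (\<lambda>t. A t + B t)"
  by (simp add: pmat_def polyfun_add)

lemma pmat_diff: "pmat A \<Longrightarrow> pmat B \<Longrightarrow> pmat (\<lambda>t. A t - B t)"
  by (simp add: pmat_def polyfun_diff)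

lemma pmat_mult: "pmat A \<Longrightarrow> pmat B \<Longrightarrow> pmat (\<lambda>t. A t ** B t)"
  unfolding pmat_def matrix_matrix_mult_def by (simp add: sum_3 polyfun_add polyfun_mult)

lemma pmat_smult3: "polyfun c \<Longrightarrow> pmat A \<Longrightarrow> pmat (\<lambda>t. smult3 (c t) (A t))"
  by (simp add: pmat_def polyfun_mult)

lemma pmat_sum: "(\<And>j. j \<in> S \<Longrightarrow> pmat (A j)) \<Longrightarrow> pmat (\<lambda>t. \<Sum>j\<in>S. A j t)"
  unfolding pmat_def by (simp add: polyfun_sum)

lemma polyfun_det: "pmat A \<Longrightarrow> polyfun (\<lambda>t. det (A t))"
  unfolding pmat_def det_3 by (simp add: polyfun_add polyfun_diff polyfun_mult)

lemma pmat_nz_add: "pmat_nz A \<Longrightarrow> pmat_nz B \<Longrightarrow> pmat_nz (\<lambda>t. A t + B t)"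
  by (simp add: pmat_nz_def polyfun_nz_add)

text \<open>Bounds the order of the pole of Phi(s) at t = 0.\<close>

definition laurent_depth :: "zgroupring \<Rightarrow> nat" where
  "laurent_depth s = sum_list (map (\<lambda>(c, v). nat \<bar>expsum v\<bar>) s)"

lemma pmat_nz_Phi:
  "K \<ge> laurent_depth s \<Longrightarrow> pmat_nz (\<lambda>t. smult3 (t ^ K) (Phi M y t s))"
proof (induction s arbitrary: K)
  case (Cons a s)
  obtain c v where a: "a = (c, v)" by fastforce
  have K: "K \<ge> laurent_depth s" "int K + expsum v \<ge> 0"
    using Cons.prems by (auto simp: laurent_depth_def a)
  have pow: "t ^ nat (int K + expsum v) = t ^ K * t powi expsum v" if "t \<noteq> 0" for t :: complex
  proof -
    have "t ^ nat (int K + expsum v) = t powi (int K + expsum v)"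
      using K(2) by (simp add: power_int_def)
    also have "\<dots> = t ^ K * t powi expsum v"
      using that by (subst power_int_add) simp_all
    finally show ?thesis .
  qed
  have "pmat_nz (\<lambda>t. smult3 (t ^ K) (smult3 (of_int c) (Phi_word M y t v)))"
    unfolding pmat_nz_def
  proof (intro allI)
    fix i j
    have "polyfun_nz (\<lambda>t. t ^ nat (int K + expsum v) * (of_int c * Ad_word M y v $ i $ j))"
      by (intro polyfun_nz_mult polyfun_nz_power polyfun_nz_const)
    then show "polyfun_nz (\<lambda>t. smult3 (t ^ K) (smult3 (of_int c) (Phi_word M y t v)) $ i $ j)"
      by (rule polyfun_nz_cong) (simp add: Phi_word_def pow mult_ac)
  qed
  with Cons.IH[OF K(1)] show ?case
    by (simp add: a Phi_Cons smult3_add_right pmat_nz_add)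
qed (simp add: pmat_nz_def)

definition det3 :: "complex \<Rightarrow> complex \<Rightarrow> complex \<Rightarrow> complex \<Rightarrow> complex \<Rightarrow> complex \<Rightarrow>
   complex \<Rightarrow> complex \<Rightarrow> complex \<Rightarrow> complex" where
  "det3 u1 u2 u3 v1 v2 v3 w1 w2 w3 =
     u1 * (v2 * w3 - v3 * w2) - v1 * (u2 * w3 - u3 * w2) + w1 * (u2 * v3 - u3 * v2)"

lemma det_eq_det3:
  "det (A::mat3) = det3 (A$1$1) (A$2$1) (A$3$1) (A$1$2) (A$2$2) (A$3$2) (A$1$3) (A$2$3) (A$3$3)"
  by (simp add: det_3 det3_def algebra_simps)

lemma det3_scale: "c^3 * det3 u1 u2 u3 v1 v2 v3 w1 w2 w3
   = det3 (c * u1) (c * u2) (c * u3) (c * v1) (c * v2) (c * v3) (c * w1) (c * w2) (c * w3)"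
  by (simp add: det3_def power3_eq_cube algebra_simps)

lemma fundamental_formula_columns:
  fixes P Q :: mat3
  assumes M2: "M * M = 1"
    and E: "P ** (smult3 t (Ad_explicit (mk2 M 1 0 M)) - mat 1)
      + Q ** (smult3 t (Ad_explicit (mk2 M 0 b M)) - mat 1) = 0"
  shows "(t - 1) * P$i$1 + (t - 1) * Q$i$1 - M * b * t * Q$i$2 - b^2 * t * Q$i$3 = 0"
    "- 2 * M * t * P$i$1 + (t - 1) * P$i$2 + (t - 1) * Q$i$2 + 2 * M * b * t * Q$i$3 = 0"
    "- t * P$i$1 + M * t * P$i$2 + (t - 1) * P$i$3 + (t - 1) * Q$i$3 = 0"
proof -
  have M2': "M^2 = 1" using M2 by (simp add: power2_eq_square)
  have MM: "M * (M * x) = x" for x using M2 by (simp add: mult.assoc[symmetric])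
  have e: "(P ** (smult3 t (Ad_explicit (mk2 M 1 0 M)) - mat 1)
      + Q ** (smult3 t (Ad_explicit (mk2 M 0 b M)) - mat 1))$i$j = 0" for j
    using E by simp
  show "(t - 1) * P$i$1 + (t - 1) * Q$i$1 - M * b * t * Q$i$2 - b^2 * t * Q$i$3 = 0"
    using e[of 1] by (simp add: matrix_matrix_mult_def sum_3 Ad_explicit_def mat_def M2' algebra_simps)
  show "- 2 * M * t * P$i$1 + (t - 1) * P$i$2 + (t - 1) * Q$i$2 + 2 * M * b * t * Q$i$3 = 0"
    using e[of 2] by (simp add: matrix_matrix_mult_def sum_3 Ad_explicit_def mat_def M2' algebra_simps MM)
  show "- t * P$i$1 + M * t * P$i$2 + (t - 1) * P$i$3 + (t - 1) * Q$i$3 = 0"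
    using e[of 3] by (simp add: matrix_matrix_mult_def sum_3 Ad_explicit_def mat_def M2' algebra_simps)
qed

text \<open>Four column operations; three of them produce a factor t - 1.\<close>

lemma det3_column_elimination:
  fixes t M b :: complex and P Q :: "3 \<Rightarrow> 3 \<Rightarrow> complex"
  assumes M2: "M * M = 1"
  and c1: "\<And>i. (t - 1) * P i 1 + (t - 1) * Q i 1 - M * b * t * Q i 2 - b^2 * t * Q i 3 = 0"
  and c2: "\<And>i. - 2 * M * t * P i 1 + (t - 1) * P i 2 + (t - 1) * Q i 2 + 2 * M * b * t * Q i 3 = 0"
  and c3: "\<And>i. - t * P i 1 + M * t * P i 2 + (t - 1) * P i 3 + (t - 1) * Q i 3 = 0"
  shows "4 * b * t^3 * det3 (P 1 1) (P 2 1) (P 3 1) (P 1 2) (P 2 2) (P 3 2) (P 1 3) (P 2 3) (P 3 3)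
    = - ((t - 1)^3 * det3 (b * (P 1 2 + Q 1 2) + 2 * M * (P 1 1 + Q 1 1))
                       (b * (P 2 2 + Q 2 2) + 2 * M * (P 2 1 + Q 2 1))
                       (b * (P 3 2 + Q 3 2) + 2 * M * (P 3 1 + Q 3 1))
                       (Q 1 3) (Q 2 3) (Q 3 3) (P 1 3) (P 2 3) (P 3 3))"
proof -
  have S1: "t * M * det3 (P 1 1) (P 2 1) (P 3 1) (P 1 2) (P 2 2) (P 3 2) (P 1 3) (P 2 3) (P 3 3)
      = - (t - 1) * det3 (P 1 1) (P 2 1) (P 3 1) (Q 1 3) (Q 2 3) (Q 3 3) (P 1 3) (P 2 3) (P 3 3)"
    using c3[of 1] c3[of 2] c3[of 3] unfolding det3_def by algebra
  have S2: "2 * M * t * det3 (P 1 1) (P 2 1) (P 3 1) (Q 1 3) (Q 2 3) (Q 3 3) (P 1 3) (P 2 3) (P 3 3)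
      = (t - 1) * det3 (P 1 2 + Q 1 2) (P 2 2 + Q 2 2) (P 3 2 + Q 3 2)
          (Q 1 3) (Q 2 3) (Q 3 3) (P 1 3) (P 2 3) (P 3 3)"
    using c2[of 1] c2[of 2] c2[of 3] unfolding det3_def by algebra
  have S3: "t * det3 (P 1 2 + Q 1 2) (P 2 2 + Q 2 2) (P 3 2 + Q 3 2)
          (Q 1 3) (Q 2 3) (Q 3 3) (P 1 3) (P 2 3) (P 3 3)
      = det3 (M * t * P 1 1 + t * Q 1 2) (M * t * P 2 1 + t * Q 2 2) (M * t * P 3 1 + t * Q 3 2)
           (Q 1 3) (Q 2 3) (Q 3 3) (P 1 3) (P 2 3) (P 3 3)"
    using c3[of 1] c3[of 2] c3[of 3] M2 unfolding det3_def by algebra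
  have S4: "2 * b * det3 (M * t * P 1 1 + t * Q 1 2) (M * t * P 2 1 + t * Q 2 2)
          (M * t * P 3 1 + t * Q 3 2) (Q 1 3) (Q 2 3) (Q 3 3) (P 1 3) (P 2 3) (P 3 3)
      = (t - 1) * det3 (b * (P 1 2 + Q 1 2) + 2 * M * (P 1 1 + Q 1 1))
                       (b * (P 2 2 + Q 2 2) + 2 * M * (P 2 1 + Q 2 1))
                       (b * (P 3 2 + Q 3 2) + 2 * M * (P 3 1 + Q 3 1))
                       (Q 1 3) (Q 2 3) (Q 3 3) (P 1 3) (P 2 3) (P 3 3)"
    using c1[of 1] c1[of 2] c1[of 3] c2[of 1] c2[of 2] c2[of 3] M2 unfolding det3_def by algebra
  from S1 S2 S3 S4 M2 show ?thesis
    by (simp add: power3_eq_cube) algebra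
qed

lemma Phi_word_eq_one:
  "rho_word M y r = mat 1 \<Longrightarrow> expsum r = 0 \<Longrightarrow> Phi_word M y t r = mat 1"
  by (simp add: Phi_word_def Ad_word_def Ad_one)

lemma Phi_word_la_explicit: "M * M = 1 \<Longrightarrow> Phi_word M y t [la] = smult3 t (Ad_explicit (mk2 M 1 0 M))"
  by (simp add: Phi_word_def Ad_word_def la_def expsum_Cons rho_word_single rho_letter_simps
      Ad_eq_Ad_explicit det_mk2)

lemma Phi_word_lb_explicit:
  "M * M = 1 \<Longrightarrow> Phi_word M y t [lb] = smult3 t (Ad_explicit (mk2 M 0 (2 - y) M))"
  by (simp add: Phi_word_def Ad_word_def lb_def expsum_Cons rho_word_single rho_letter_simps
      Ad_eq_Ad_explicit det_mk2)

lemma fox_det_divisible: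
  assumes M2: "M * M = 1" and r: "rho_word M y r = mat 1" "expsum r = 0" and y: "y \<noteq> 2"
  obtains a H where
    "\<And>t. t \<noteq> 0 \<Longrightarrow> t ^ a * det (Phi M y t (fox GA r)) = (t - 1)^3 * poly H t"
proof -
  define K where "K = max (laurent_depth (fox GA r)) (laurent_depth (fox GB r))"
  define P where "P t = smult3 (t ^ K) (Phi M y t (fox GA r))" for t
  define Q where "Q t = smult3 (t ^ K) (Phi M y t (fox GB r))" for t
  let ?b = "2 - y"
  define G where "G t = det3 (?b * (P t$1$2 + Q t$1$2) + 2 * M * (P t$1$1 + Q t$1$1))
                       (?b * (P t$2$2 + Q t$2$2) + 2 * M * (P t$2$1 + Q t$2$1))
                       (?b * (P t$3$2 + Q t$3$2) + 2 * M * (P t$3$1 + Q t$3$1))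
                       (Q t$1$3) (Q t$2$3) (Q t$3$3) (P t$1$3) (P t$2$3) (P t$3$3)" for t
  have "pmat_nz P" "pmat_nz Q"
    unfolding P_def Q_def by (simp_all add: pmat_nz_Phi K_def)
  then have "polyfun_nz G"
    unfolding G_def det3_def pmat_nz_def
    by (intro polyfun_nz_add polyfun_nz_diff polyfun_nz_mult polyfun_nz_const) auto
  then obtain H0 where H0: "\<And>t. t \<noteq> 0 \<Longrightarrow> G t = poly H0 t" unfolding polyfun_nz_def by blast
  have "t ^ (3 + 3 * K) * det (Phi M y t (fox GA r)) = (t - 1)^3 * poly (smult (- 1 / (4 * ?b)) H0) t"
    if t: "t \<noteq> 0" for t
  proof -
    have "P t ** (smult3 t (Ad_explicit (mk2 M 1 0 M)) - mat 1)
        + Q t ** (smult3 t (Ad_explicit (mk2 M 0 ?b M)) - mat 1) = 0"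
      using Phi_fox_fundamental[OF M2 t, of y r] Phi_word_eq_one[OF r]
      by (simp add: P_def Q_def Phi_word_la_explicit[OF M2] Phi_word_lb_explicit[OF M2] smult3_mult_left
          flip: smult3_add_right)
    then have "4 * ?b * t^3 * det3 (P t$1$1) (P t$2$1) (P t$3$1) (P t$1$2) (P t$2$2) (P t$3$2)
        (P t$1$3) (P t$2$3) (P t$3$3) = - ((t - 1)^3 * G t)"
      unfolding G_def
      by (intro det3_column_elimination[where P = "\<lambda>i j. P t $ i $ j" and Q = "\<lambda>i j. Q t $ i $ j",
          OF M2] fundamental_formula_columns[OF M2])
    moreover have "det3 (P t$1$1) (P t$2$1) (P t$3$1) (P t$1$2) (P t$2$2) (P t$3$2) (P t$1$3)
        (P t$2$3) (P t$3$3) = (t ^ K)^3 * det (Phi M y t (fox GA r))"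
      by (simp add: det_eq_det3 det3_scale P_def)
    ultimately show ?thesis using H0[OF t] y by (simp add: power_add power_mult field_simps)
  qed
  then show ?thesis by (rule that)
qed

lemma poly_eqI_nonzero:
  fixes p q :: "complex poly"
  assumes "\<And>t. t \<noteq> 0 \<Longrightarrow> poly p t = poly q t"
  shows "p = q"
proof (rule ccontr)
  assume "p \<noteq> q"
  then have "finite {t. poly (p - q) t = 0}" by (intro poly_roots_finite) simp
  moreover have "UNIV - {0::complex} \<subseteq> {t. poly (p - q) t = 0}" using assms by auto
  moreover have "infinite (UNIV - {0::complex})" by (simp add: infinite_UNIV_char_0)
  ultimately show False using finite_subset by blast
qed

lemma reflect_poly_eq_scaled:
  fixes F G :: "complex poly"
  assumes "\<And>t. t \<noteq> 0 \<Longrightarrow> poly G t = t ^ d * poly F (1 / t)"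
  shows "monom 1 (degree F) * G = monom 1 d * reflect_poly F"
  by (rule poly_eqI_nonzero) (simp add: assms poly_monom poly_reflect_poly_nz divide_inverse)

lemma degree_eq_of_reflect:
  fixes F G :: "complex poly"
  assumes F0: "coeff F 0 \<noteq> 0" and rel: "\<And>t. t \<noteq> 0 \<Longrightarrow> poly G t = t ^ d * poly F (1 / t)"
  shows "degree G = d"
proof -
  have id: "monom 1 (degree F) * G = monom 1 d * reflect_poly F"
    by (rule reflect_poly_eq_scaled[OF rel])
  have F: "F \<noteq> 0" using F0 by auto
  then have "G \<noteq> 0" using id by (auto simp: monom_eq_0_iff)
  then have "degree (monom 1 (degree F) * G) = degree F + degree G"
    by (simp add: degree_mult_eq degree_monom_eq)
  moreover have "degree (monom 1 d * reflect_poly F) = d + degree F"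
    using F F0 by (simp add: degree_mult_eq degree_monom_eq)
  ultimately show ?thesis using id by simp
qed

lemma polyfun_reciprocal_ends:
  assumes "polyfun f" "polyfun g" and gf: "\<And>t. t \<noteq> 0 \<Longrightarrow> g t = t ^ d * f (1 / t)"
    and "f 0 \<noteq> 0" "g 0 \<noteq> 0"
  obtains F where "\<And>t. f t = poly F t" "degree F = d" "lead_coeff F = g 0" "coeff F 0 = f 0"
proof -
  obtain F where F: "\<And>t. f t = poly F t" using assms(1) unfolding polyfun_def by blast
  obtain G where G: "\<And>t. g t = poly G t" using assms(2) unfolding polyfun_def by blast
  have F0: "coeff F 0 = f 0" and G0: "coeff G 0 = g 0"
    using F[of 0] G[of 0] by (simp_all add: poly_0_coeff_0)
  have GF: "poly G t = t ^ d * poly F (1 / t)" if "t \<noteq> 0" for t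
    using gf[OF that] F G by simp
  have FG: "poly F t = t ^ d * poly G (1 / t)" if "t \<noteq> 0" for t
    using GF[of "1 / t"] that by (simp add: power_one_over field_simps)
  have dF: "degree F = d"
    using degree_eq_of_reflect[OF _ FG] G0 assms(5) by simp
  then have "monom 1 d * G = monom 1 d * reflect_poly F"
    using reflect_poly_eq_scaled[OF GF] by simp
  then have "G = reflect_poly F" by (simp add: monom_eq_0_iff)
  then have "lead_coeff F = g 0" using G0 by simp
  then show ?thesis using F dF F0 by (intro that)
qed

lemma cube_factor_of_numerator:
  fixes F H :: "complex poly"
  assumes "F \<noteq> 0" and "\<And>t. t \<noteq> 0 \<Longrightarrow> t ^ a * poly F t = t ^ e * ((t - 1)^3 * poly H t)"
  obtains q where "F = [:-1, 1:]^3 * q"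
proof -
  have "monom 1 a * F = [:-1, 1:]^3 * (monom 1 e * H)"
  proof (rule poly_eqI_nonzero)
    fix t :: complex
    assume "t \<noteq> 0"
    then show "poly (monom 1 a * F) t = poly ([:-1, 1:]^3 * (monom 1 e * H)) t"
      using assms(2)[of t] by (simp add: poly_monom algebra_simps)
  qed
  then have dvd: "[:-1, 1:]^3 dvd monom 1 a * F" by (metis dvd_triv_left)
  have m: "monom (1::complex) a \<noteq> 0" by (simp add: monom_eq_0_iff)
  have "order 1 (monom (1::complex) a) = 0"
    using order_root[of "monom (1::complex) a" 1] m by (simp add: poly_monom)
  then have "order 1 (monom 1 a * F) = order 1 F" using assms(1) m by (simp add: order_mult)
  then have "[:-1, 1:]^3 dvd F" using dvd assms(1) m by (simp add: order_divides)
  then show ?thesis using that by (elim dvdE) blast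
qed

lemma adj_tap_den_eq:
  assumes "M * M = 1"
  shows "adj_tap_den M y t = (1 - t)^3"
proof -
  have M2: "M^2 = 1" "M * (M * x) = x" for x
    using assms by (simp_all add: power2_eq_square mult.assoc[symmetric])
  have "Phi M y t [(1, []), (-1, [lb])] = mat 1 - smult3 t (Ad_explicit (mk2 M 0 (2 - y) M))"
    using assms by (simp add: Phi_Cons Phi_word_lb_explicit smult3_minus_left)
  then have "adj_tap_den M y t = det (mat 1 - smult3 t (Ad_explicit (mk2 M 0 (2 - y) M)))"
    by (simp only: adj_tap_den_def)
  then show ?thesis
    by (simp add: det_3 Ad_explicit_def mat_def M2 power3_eq_cube algebra_simps)
qed

lemma tap_shape_uminus:
  assumes "tap_shape Delta den D (- c)"
  shows "tap_shape Delta den D c"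
proof -
  obtain p i s s' where "s \<in> {1, -1}" "s' \<in> {1, -1}" "degree p = D" "lead_coeff p = - c"
    "coeff p 0 = s' * - c" "\<forall>t. t \<noteq> 0 \<and> den t \<noteq> 0 \<longrightarrow> Delta t = s * t powi i * poly p t"
    using assms unfolding tap_shape_def by blast
  then show ?thesis
    unfolding tap_shape_def by (intro exI[of _ "- p"] exI[of _ i] exI[of _ "- s"] exI[of _ s']) auto
qed

text \<open>The quotient f / (t - 1)^3 is the polynomial required by tap_shape.\<close>

lemma tap_shape_from_ends:
  fixes f g :: "complex \<Rightarrow> complex"
  assumes M2: "M * M = 1" and r: "rho_word M y (relator k n) = mat 1" and y: "y \<noteq> 2"
    and "polyfun f" "polyfun g"
    and fN: "\<And>t. t \<noteq> 0 \<Longrightarrow> f t = t ^ e * det (Phi M y t (fox GA (relator k n)))"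
    and gf: "\<And>t. t \<noteq> 0 \<Longrightarrow> g t = t ^ d * f (1 / t)"
    and f0: "f 0 = c" and g0: "g 0 = c" and c: "c \<noteq> 0"
  shows "tap_shape (adj_tap k n M y) (adj_tap_den M y) (d - 3) c"
proof -
  obtain F where F: "\<And>t. f t = poly F t" "degree F = d" "lead_coeff F = c" "coeff F 0 = c"
    using polyfun_reciprocal_ends[OF assms(4,5) gf] f0 g0 c by metis
  obtain a H where H: "\<And>t. t \<noteq> 0 \<Longrightarrow> t ^ a * det (Phi M y t (fox GA (relator k n)))
      = (t - 1)^3 * poly H t"
    using fox_det_divisible[OF M2 r expsum_relator y] by blast
  have "F \<noteq> 0" using F c by auto
  then obtain q where q: "F = [:-1, 1:]^3 * q"
    by (rule cube_factor_of_numerator[where a = a and e = e and H = H])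
       (simp add: fN F(1)[symmetric] H algebra_simps)
  have "q \<noteq> 0" using \<open>F \<noteq> 0\<close> q by auto
  then have "degree F = 3 + degree q"
    by (simp add: q degree_mult_eq degree_power_eq)
  moreover have "lead_coeff q = c" using F(3) by (simp add: q lead_coeff_mult lead_coeff_power)
  moreover have "coeff q 0 = - 1 * c"
  proof -
    have "coeff F 0 = - coeff q 0" by (simp add: q coeff_mult_0 power3_eq_cube)
    then show ?thesis using F(4) by simp
  qed
  moreover have "adj_tap k n M y t = - 1 * t powi - int e * poly q t"
    if "t \<noteq> 0" "adj_tap_den M y t \<noteq> 0" for t
  proof -
    have den: "det (Phi M y t [(1, []), (-1, [lb])]) = - ((t - 1)^3)"
      using adj_tap_den_eq[OF M2, of y t] by (simp add: adj_tap_den_def power3_eq_cube algebra_simps)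
    have "t ^ e * det (Phi M y t (fox GA (relator k n))) = (t - 1)^3 * poly q t"
      using fN[OF that(1)] by (simp add: F(1) q algebra_simps)
    moreover have "(t - 1)^3 \<noteq> 0" using that(2) den by (simp add: adj_tap_den_def)
    ultimately show ?thesis
      using that(1) by (simp add: adj_tap_def den power_int_minus field_simps)
  qed
  ultimately show ?thesis unfolding tap_shape_def using F(2)
    by (intro exI[of _ q] exI[of _ "- int e"] exI[of _ "-1"]) auto
qed

section \<open>The relation and faithfulness\<close>

abbreviation ba_inv :: word where "ba_inv \<equiv> [lb, la']"
abbreviation b_inv_a :: word where "b_inv_a \<equiv> [lb', la]"

lemma w_word_even: "even k \<Longrightarrow> w_word k = wpow ba_inv (k div 2) @ wpow b_inv_a (k div 2)"
  by (simp add: w_word_def Let_def)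

lemma w_word_odd: "odd k \<Longrightarrow> w_word k = wpow ba_inv (k div 2) @ [lb, la] @ wpow b_inv_a (k div 2)"
  by (simp add: w_word_def Let_def)

lemma expsum_w_word_odd: "odd k \<Longrightarrow> expsum (w_word k) = 2"
  by (simp add: w_word_odd expsum_append expsum_wpow expsum_Cons lb_def la_def la'_def lb'_def)

lemma trace_rho_ba_inv: "M * M = 1 \<Longrightarrow> trace (rho_word M y ba_inv) = y"
  by (simp add: rho_word_Cons la'_def lb_def rho_letter_simps mk2_mult mat_mk2 trace_mk2)

lemma trace_rho_b_inv_a: "M * M = 1 \<Longrightarrow> trace (rho_word M y b_inv_a) = y"
  by (simp add: rho_word_Cons la_def lb'_def rho_letter_simps mk2_mult mat_mk2 trace_mk2)

lemma rho_relation: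
  assumes M2: "M * M = 1" and r: "rho_word M y (relator k n) = mat 1"
  defines "W \<equiv> rho_word M y (wpow (w_word k) n)"
  shows "W ** rho_letter M y la = rho_letter M y lb ** W"
proof -
  let ?Wi = "rho_word M y (inv_word (wpow (w_word k) n))"
  let ?b = "rho_letter M y lb" and ?b' = "rho_letter M y lb'"
  have "?b' ** ?b = mat 1"
    using rho_letter_inv_letter[OF M2, of y lb] by (simp add: lb_def lb'_def inv_letter_def)
  moreover have "?Wi ** W = mat 1" using rho_word_inv_word_mult[OF M2] by (simp add: W_def)
  moreover have "W ** rho_letter M y la ** ?Wi ** ?b' = mat 1"
    using r by (simp add: relator_def W_def rho_word_append rho_word_Cons matrix_mul_assoc)
  then have "W ** rho_letter M y la ** ?Wi ** ?b' ** ?b ** W = ?b ** W" by simp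
  ultimately show ?thesis by (simp add: matrix_mul_assoc[symmetric])
qed

lemma rho_w_pow_not_scalar:
  assumes M2: "M * M = 1" and r: "rho_word M y (relator k n) = mat 1" and "c \<noteq> 0"
  shows "rho_word M y (wpow (w_word k) n) \<noteq> mat c"
proof
  assume "rho_word M y (wpow (w_word k) n) = mat c"
  then have "mat c ** rho_letter M y la = mat c ** rho_letter M y lb"
    using rho_relation[OF M2 r] mat_mult_commute by metis
  then have "rho_letter M y la = rho_letter M y lb"
    by (rule mat_mult_cancel_left[OF \<open>c \<noteq> 0\<close>])
  then show False using M2 by (simp add: la_def lb_def rho_letter_simps mk2_eq_iff)
qed

lemma y_ne_2:
  assumes M2: "M * M = 1" and r: "rho_word M y (relator k n) = mat 1"
  shows "y \<noteq> 2"
proof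
  assume "y = 2"
  then have b: "rho_letter M y lb = mat M" using M2 by (simp add: lb_def rho_letter_simps mat_mk2)
  let ?W = "rho_word M y (wpow (w_word k) n)"
  have "rho_word M y (inv_word (wpow (w_word k) n)) ** (?W ** rho_letter M y la)
     = rho_word M y (inv_word (wpow (w_word k) n)) ** (?W ** mat M)"
    using rho_relation[OF M2 r] b mat_mult_commute by metis
  then have "rho_letter M y la = mat M"
    using rho_word_inv_word_mult[OF M2] by (simp add: matrix_mul_assoc)
  then show False using M2 by (simp add: la_def rho_letter_simps mat_mk2 mk2_eq_iff)
qed

lemma expsum_eq_0_if_rho_scalar:
  assumes faith: "\<And>u. rho_word M y u = mat 1 \<or> rho_word M y u = - mat 1 \<Longrightarrow> gtriv (relator k n) u"
    and "rho_word M y u = mat c" "c * c = 1"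
  shows "expsum u = 0"
  using faith mat_square_one_cases[OF assms(3)] assms(2) gtriv_expsum expsum_relator by metis

lemma matpow_ba_inv_b_inv_a_scalar:
  assumes M2: "M * M = 1" and "m \<ge> 1" "chebU m y = 0"
  obtains c c' where "matpow (rho_word M y ba_inv) m = mat c" "c * c = 1"
    "matpow (rho_word M y b_inv_a) m = mat c'" "c' * c' = 1"
  using matpow_scalar_if_chebU_zero[OF det_rho_word[OF M2, of y ba_inv] assms(2)]
    matpow_scalar_if_chebU_zero[OF det_rho_word[OF M2, of y b_inv_a] assms(2)]
    assms(3) trace_rho_ba_inv[OF M2] trace_rho_b_inv_a[OF M2] by metis

lemma chebU_ne_0_even:
  assumes M2: "M * M = 1" and r: "rho_word M y (relator k n) = mat 1" and "even k" "k \<ge> 1"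
  shows "chebU (k div 2) y \<noteq> 0"
proof
  assume U: "chebU (k div 2) y = 0"
  have "k div 2 \<ge> 1" using assms(3,4) by presburger
  then obtain c c' where c: "matpow (rho_word M y ba_inv) (k div 2) = mat c" "c * c = 1"
    and c': "matpow (rho_word M y b_inv_a) (k div 2) = mat c'" "c' * c' = 1"
    using matpow_ba_inv_b_inv_a_scalar[OF M2 _ U] by blast
  have "rho_word M y (wpow (w_word k) n) = mat ((c * c') ^ n)"
    using assms(3) by (simp add: w_word_even rho_word_append rho_word_wpow c c' mat_mult_mat matpow_mat)
  moreover have "(c * c') ^ n \<noteq> 0" using c c' by auto
  ultimately show False using rho_w_pow_not_scalar[OF M2 r] by blast
qed

lemma chebU_trace_w_ne_0:
  assumes M2: "M * M = 1" and r: "rho_word M y (relator k n) = mat 1" and "n \<ge> 1"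
  shows "chebU n (trace (rho_word M y (w_word k))) \<noteq> 0"
proof
  assume "chebU n (trace (rho_word M y (w_word k))) = 0"
  then obtain c where "matpow (rho_word M y (w_word k)) n = mat c" "c * c = 1"
    using matpow_scalar_if_chebU_zero[OF det_rho_word[OF M2] assms(3)] by auto
  moreover from this have "c \<noteq> 0" by auto
  ultimately show False using rho_w_pow_not_scalar[OF M2 r] by (auto simp: rho_word_wpow)
qed

text \<open>
  If w acts like ba up to a sign, the relation makes u = rho0(ba) satisfy u^n a = b u^n, which
  forces S_(n-1)(tr u) = S_(n-2)(tr u) and hence S_(2n-2)(tr u) = 0: then u^(2n-1) = \<plusminus>1, as for the
  central element of a torus knot group.
\<close>

lemma rho_ba_power_scalar:
  assumes M2: "M * M = 1" and "n \<ge> 1"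
    and rel: "matpow (rho_word M y [lb, la]) n ** rho_letter M y la
      = rho_letter M y lb ** matpow (rho_word M y [lb, la]) n"
  obtains c where "matpow (rho_word M y [lb, la]) (2 * n - 1) = mat c" "c * c = 1"
proof -
  define \<beta> where "\<beta> = 2 - y"
  define \<tau> where "\<tau> = \<beta> + 2"
  define u where "u = rho_word M y [lb, la]"
  have u: "u = mk2 1 M (\<beta> * M) (\<beta> + 1)"
    using M2 by (simp add: u_def \<beta>_def rho_word_Cons la_def lb_def rho_letter_simps mk2_mult mat_mk2
        algebra_simps)
  have d: "1 * (\<beta> + 1) - M * (\<beta> * M) = 1" using M2 by (simp add: algebra_simps)
  obtain n' where n': "n = Suc n'" using assms(2) by (cases n) auto
  have un: "matpow u n = mk2 (chebU n \<tau> - chebU n' \<tau>) (chebU n \<tau> * M) (chebU n \<tau> * (\<beta> * M))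
      (chebU n \<tau> * (\<beta> + 1) - chebU n' \<tau>)"
    using matpow_Suc_mk2[OF d, of n'] by (simp add: u n' \<tau>_def add.commute)
  have "(matpow u n ** rho_letter M y la) $ 1 $ 2 = (rho_letter M y lb ** matpow u n) $ 1 $ 2"
    using rel by (simp add: u_def)
  then have "chebU n \<tau> = chebU n' \<tau>"
    using M2 by (simp add: un la_def lb_def rho_letter_simps mk2_mult algebra_simps)
  then have "chebU (2 * n - 1) (trace u) = 0"
    using chebU_add[of n' n' \<tau>] by (simp add: n' mult_2 u trace_mk2 \<tau>_def add.commute)
  moreover have "det u = 1" using d by (simp add: u det_mk2)
  moreover have "2 * n - 1 \<ge> 1" using assms(2) by simp
  ultimately show ?thesis
    using matpow_scalar_if_chebU_zero[of u "2 * n - 1"] that by (auto simp: u_def)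
qed

lemma not_faithful_if_w_scalar_ba:
  assumes M2: "M * M = 1" and r: "rho_word M y (relator k n) = mat 1" and "n \<ge> 1"
    and faith: "\<And>u. rho_word M y u = mat 1 \<or> rho_word M y u = - mat 1 \<Longrightarrow> gtriv (relator k n) u"
    and w: "expsum (w_word k) = 2" "rho_word M y (w_word k) = mat e ** rho_word M y [lb, la]"
    and e: "e * e = 1"
  shows False
proof -
  let ?u = "rho_word M y [lb, la]"
  have pow: "rho_word M y (wpow (w_word k) j) = mat (e ^ j) ** matpow ?u j" for j
    by (simp add: rho_word_wpow w matpow_mat_mult)
  have "mat (e ^ n) ** (matpow ?u n ** rho_letter M y la)
      = mat (e ^ n) ** (rho_letter M y lb ** matpow ?u n)"
    using rho_relation[OF M2 r] mat_mult_commute[of "e ^ n" "rho_letter M y lb"]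
    by (simp add: pow matrix_mul_assoc)
  moreover have "e ^ n \<noteq> 0" using e by auto
  ultimately have "matpow ?u n ** rho_letter M y la = rho_letter M y lb ** matpow ?u n"
    using mat_mult_cancel_left by blast
  then obtain c where c: "matpow ?u (2 * n - 1) = mat c" "c * c = 1"
    using rho_ba_power_scalar[OF M2 \<open>n \<ge> 1\<close>] by blast
  have "rho_word M y (wpow (w_word k) (2 * n - 1)) = mat (e ^ (2 * n - 1) * c)"
    by (simp only: pow c mat_mult_mat)
  moreover have "(e ^ (2 * n - 1) * c) * (e ^ (2 * n - 1) * c) = 1"
    using e c by (simp add: mult_ac power_mult_distrib[symmetric])
  ultimately have "expsum (wpow (w_word k) (2 * n - 1)) = 0"
    using expsum_eq_0_if_rho_scalar[OF faith] by blast
  then show False using w(1) \<open>n \<ge> 1\<close> by (simp add: expsum_wpow)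
qed

lemma chebU_ne_0_odd:
  assumes M2: "M * M = 1" and r: "rho_word M y (relator k n) = mat 1" and "odd k" "k \<ge> 3" "n \<ge> 1"
    and faith: "\<And>u. rho_word M y u = mat 1 \<or> rho_word M y u = - mat 1 \<Longrightarrow> gtriv (relator k n) u"
  shows "chebU (k div 2) y \<noteq> 0"
proof
  assume U: "chebU (k div 2) y = 0"
  have "k div 2 \<ge> 1" using assms(3,4) by presburger
  then obtain c c' where c: "matpow (rho_word M y ba_inv) (k div 2) = mat c" "c * c = 1"
    and c': "matpow (rho_word M y b_inv_a) (k div 2) = mat c'" "c' * c' = 1"
    using matpow_ba_inv_b_inv_a_scalar[OF M2 _ U] by blast
  have "rho_word M y (w_word k) = mat c ** rho_word M y [lb, la] ** mat c'"
    by (simp only: w_word_odd[OF assms(3)] rho_word_append rho_word_wpow c c' matrix_mul_assoc)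
  also have "\<dots> = mat (c * c') ** rho_word M y [lb, la]"
    by (simp only: matrix_mul_assoc[symmetric] mat_mult_commute[symmetric])
       (simp add: matrix_mul_assoc mat_mult_mat mult.commute)
  finally have w: "rho_word M y (w_word k) = mat (c * c') ** rho_word M y [lb, la]" .
  moreover have "(c * c') * (c * c') = 1"
    using c(2) c'(2) by (metis mult.assoc mult.left_commute mult_1_right)
  ultimately show False
    using not_faithful_if_w_scalar_ba[OF M2 r \<open>n \<ge> 1\<close> faith expsum_w_word_odd[OF assms(3)]]
    by blast
qed

lemma not_faithful_k1:
  assumes M2: "M * M = 1" and r: "rho_word M y (relator 1 n) = mat 1" and "n \<ge> 1"
    and faith: "\<And>u. rho_word M y u = mat 1 \<or> rho_word M y u = - mat 1 \<Longrightarrow> gtriv (relator 1 n) u"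
  shows False
  using not_faithful_if_w_scalar_ba[OF M2 r \<open>n \<ge> 1\<close> faith expsum_w_word_odd[OF odd_one], where e = 1]
  by (simp add: w_word_def)

lemma Phi_word_expsum:
  "expsum u = 0 \<Longrightarrow> Phi_word M y t u = Ad_word M y u"
  "expsum u = 1 \<Longrightarrow> Phi_word M y t u = smult3 t (Ad_word M y u)"
  "expsum u = -1 \<Longrightarrow> Phi_word M y t u = smult3 (inverse t) (Ad_word M y u)"
  "expsum u = 2 \<Longrightarrow> Phi_word M y t u = smult3 (t^2) (Ad_word M y u)"
  by (simp_all add: Phi_word_def power_int_minus)

lemma Phi_word_letters:
  "Phi_word M y t [lb] = smult3 t (Ad_word M y [lb])"
  "Phi_word M y t [lb'] = smult3 (inverse t) (Ad_word M y [lb'])"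
  "Phi_word M y t ba_inv = Ad_word M y ba_inv"
  "Phi_word M y t b_inv_a = Ad_word M y b_inv_a"
  by (simp_all add: Phi_word_expsum expsum_Cons la_def lb_def la'_def lb'_def)

lemma fox_letter_generators [simp]:
  "fox_letter GA la = [(1, [])]" "fox_letter GA la' = [(-1, [la'])]"
  "fox_letter GA lb = []" "fox_letter GA lb' = []"
  by (simp_all add: la_def la'_def lb_def lb'_def)

lemma Phi_fox_relator:
  assumes M2: "M * M = 1" and t: "t \<noteq> 0" and r: "rho_word M y (relator k n) = mat 1"
  defines "X \<equiv> Phi_word M y t (w_word k)"
  shows "Phi M y t (fox GA (relator k n)) = (mat 1 - Phi_word M y t [lb]) ** (\<Sum>j<n. matpow X j)
    ** Phi M y t (fox GA (w_word k)) + matpow X n"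
proof -
  let ?W = "wpow (w_word k) n"
  let ?F = "Phi M y t (fox GA ?W)" and ?Y = "Phi_word M y t ?W"
    and ?Yi = "Phi_word M y t (inv_word ?W)" and ?a = "Phi_word M y t [la]"
    and ?b = "Phi_word M y t [lb]" and ?b' = "Phi_word M y t [lb']"
  have rel: "?Y ** ?a ** ?Yi ** ?b' = mat 1"
    using Phi_word_eq_one[OF r expsum_relator, of t]
    by (simp only: relator_def Phi_word_append[OF M2 t] matrix_mul_assoc)
  have "?b' ** ?b = mat 1"
    using Phi_word_inv_word[OF M2 t, where u = "[lb]"]
    by (simp add: inv_word_def lb_def lb'_def inv_letter_def)
  then have "?Y ** ?a ** ?Yi = (?Y ** ?a ** ?Yi ** ?b') ** ?b"
    by (simp add: matrix_mul_assoc[symmetric])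
  then have conj: "?Y ** ?a ** ?Yi = ?b" by (simp add: rel)
  have "Phi M y t (fox GA (relator k n)) = ?F + ?Y ** (Phi M y t (fox GA [la])
      + ?a ** (Phi M y t (fox GA (inv_word ?W)) + ?Yi ** Phi M y t (fox GA [lb'])))"
    by (simp only: relator_def Phi_fox_append[OF M2 t])
  also have "\<dots> = ?F + ?Y ** (mat 1 + ?a ** (- ?Yi ** ?F))"
    by (simp add: Phi_fox_inv_word[OF M2 t] Phi_single)
  also have "\<dots> = ?F + ?Y - (?Y ** ?a ** ?Yi) ** ?F"
    by (simp add: matrix_add_ldistrib matrix_diff_ldistrib matrix_neg_left matrix_neg_right
        matrix_mul_assoc)
  also have "\<dots> = (mat 1 - ?b) ** ?F + ?Y"
    by (simp add: conj matrix_diff_rdistrib)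
  finally show ?thesis
    by (simp add: X_def Phi_fox_wpow[OF M2 t] Phi_word_wpow[OF M2 t] matrix_mul_assoc)
qed

lemma Phi_fox_ba_inv_pow:
  assumes "M * M = 1" "t \<noteq> 0"
  shows "Phi M y t (fox GA (wpow ba_inv m))
    = - ((\<Sum>j<m. matpow (Ad_word M y ba_inv) j) ** Ad_word M y ba_inv)"
  by (simp add: Phi_fox_wpow[OF assms] Phi_single smult3_minus_left matrix_neg_right Phi_word_letters)

lemma Phi_fox_b_inv_a_pow:
  assumes "M * M = 1" "t \<noteq> 0"
  shows "Phi M y t (fox GA (wpow b_inv_a m))
    = smult3 (inverse t) ((\<Sum>j<m. matpow (Ad_word M y b_inv_a) j) ** Ad_word M y [lb'])"
  by (simp add: Phi_fox_wpow[OF assms] Phi_single smult3_mult_right Phi_word_letters)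

section \<open>Even k\<close>

lemma fox_matrix_even:
  assumes M2: "M * M = 1" and t: "t \<noteq> 0" and r: "rho_word M y (relator k n) = mat 1"
    and "even k"
  defines "m \<equiv> k div 2" and "C \<equiv> Ad_word M y ba_inv" and "D \<equiv> Ad_word M y b_inv_a"
    and "X \<equiv> Ad_word M y (w_word k)"
  shows "smult3 t (Phi M y t (fox GA (relator k n)))
    = (mat 1 - smult3 t (Ad_word M y [lb])) ** (\<Sum>j<n. matpow X j)
      ** (matpow C m ** (\<Sum>j<m. matpow D j) ** Ad_word M y [lb']
          - smult3 t ((\<Sum>j<m. matpow C j) ** C))
      + smult3 t (matpow X n)"
proof -
  have w: "w_word k = wpow ba_inv m @ wpow b_inv_a m"
    using \<open>even k\<close> by (simp add: w_word_even m_def)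
  have "expsum (w_word k) = 0"
    by (simp add: w expsum_append expsum_wpow expsum_Cons la_def lb_def la'_def lb'_def)
  then have PX: "Phi_word M y t (w_word k) = X" by (simp add: Phi_word_expsum X_def)
  have Fw: "smult3 t (Phi M y t (fox GA (w_word k)))
      = matpow C m ** (\<Sum>j<m. matpow D j) ** Ad_word M y [lb'] - smult3 t ((\<Sum>j<m. matpow C j) ** C)"
    using t by (simp add: w Phi_fox_append[OF M2 t] Phi_fox_ba_inv_pow[OF M2 t]
        Phi_fox_b_inv_a_pow[OF M2 t] Phi_word_wpow[OF M2 t] Phi_word_letters C_def D_def
        smult3_add_right smult3_diff_right smult3_mult_right smult3_smult3 smult3_minus_left
        matrix_mul_assoc)
  have "smult3 t (Phi M y t (fox GA (relator k n)))
      = (mat 1 - smult3 t (Ad_word M y [lb])) ** (\<Sum>j<n. matpow X j)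
        ** smult3 t (Phi M y t (fox GA (w_word k))) + smult3 t (matpow X n)"
    by (simp add: Phi_fox_relator[OF M2 t r] PX Phi_word_letters smult3_add_right
        smult3_mult_right matrix_mul_assoc)
  then show ?thesis by (simp only: Fw)
qed

lemma det_reversal_even:
  assumes "t \<noteq> 0"
  shows "det ((smult3 t (mat 1) - B) ** S ** (smult3 t F - G) + smult3 t Y)
    = t ^ 6 * det ((mat 1 - smult3 (1 / t) B) ** S ** (F - smult3 (1 / t) G) + smult3 (1 / t) Y)"
proof -
  have "smult3 (t * 1 * t) ((mat 1 - smult3 (1 / t) B) ** S ** (F - smult3 (1 / t) G))
      = smult3 t (mat 1 - smult3 (1 / t) B) ** smult3 1 S ** smult3 t (F - smult3 (1 / t) G)"
    by (rule smult3_sandwich)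
  then have "smult3 (t * t) ((mat 1 - smult3 (1 / t) B) ** S ** (F - smult3 (1 / t) G)
      + smult3 (1 / t) Y) = (smult3 t (mat 1) - B) ** S ** (smult3 t F - G) + smult3 t Y"
    using assms by (simp add: smult3_add_right smult3_diff_right smult3_smult3)
  then have "det ((smult3 t (mat 1) - B) ** S ** (smult3 t F - G) + smult3 t Y)
      = (t * t)^3 * det ((mat 1 - smult3 (1 / t) B) ** S ** (F - smult3 (1 / t) G) + smult3 (1 / t) Y)"
    by (metis det_smult3)
  then show ?thesis
    by (simp add: power2_eq_square[symmetric] power_mult[symmetric])
qed

lemma tap_shape_even:
  assumes M2: "M * M = 1" and r: "rho_word M y (relator k n) = mat 1"
    and "even k" "k \<ge> 1" "n \<ge> 1"
    and U: "chebU (k div 2) y \<noteq> 0" "chebU n (trace (rho_word M y (w_word k))) \<noteq> 0"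
  shows "tap_shape (adj_tap k n M y) (adj_tap_den M y) 3 (of_nat (k div 2 * n)
    * (cheb_S (k div 2 - 1) y)\<^sup>2 * (cheb_S (n - 1) (trace (rho_word M y (w_word k))))\<^sup>2)"
proof -
  define m where "m = k div 2"
  define z where "z = trace (rho_word M y (w_word k))"
  define C D B X where "C = Ad_word M y ba_inv" and "D = Ad_word M y b_inv_a"
    and "B = Ad_word M y [lb]" and "X = Ad_word M y (w_word k)"
  define S F G where "S = (\<Sum>j<n. matpow X j)" and "F = matpow C m ** (\<Sum>j<m. matpow D j) ** Ad_word M y [lb']"
    and "G = (\<Sum>j<m. matpow C j) ** C"
  define PP where "PP t = (mat 1 - smult3 t B) ** S ** (F - smult3 t G) + smult3 t (matpow X n)" for t
  define PR where "PR t = (smult3 t (mat 1) - B) ** S ** (smult3 t F - G) + smult3 t (matpow X n)" for t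
  define c where "c = of_nat n * (chebU n z)^2 * (of_nat m * (chebU m y)^2)"
  have "m \<ge> 1" using assms(3,4) unfolding m_def by presburger
  have det_sums: "det S = of_nat n * (chebU n z)^2" "det (\<Sum>j<m. matpow D j) = of_nat m * (chebU m y)^2"
      "det (\<Sum>j<m. matpow C j) = of_nat m * (chebU m y)^2"
    by (simp_all add: S_def X_def C_def D_def z_def det_sum_matpow_Ad_word[OF M2]
        trace_rho_ba_inv[OF M2] trace_rho_b_inv_a[OF M2])
  have dets: "det B = 1" "det C = 1"
    by (simp_all add: B_def C_def det_Ad_word[OF M2])
  have "tap_shape (adj_tap k n M y) (adj_tap_den M y) (6 - 3) c"
  proof (rule tap_shape_from_ends[OF M2 r y_ne_2[OF M2 r], where e = 3])
    show "polyfun (\<lambda>t. det (PP t))" "polyfun (\<lambda>t. det (PR t))"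
      unfolding PP_def PR_def
      by (intro polyfun_det pmat_add pmat_mult pmat_diff pmat_smult3 pmat_const polyfun_id)+
    show "det (PP t) = t ^ 3 * det (Phi M y t (fox GA (relator k n)))" if "t \<noteq> 0" for t
    proof -
      have "PP t = smult3 t (Phi M y t (fox GA (relator k n)))"
        unfolding PP_def S_def F_def G_def m_def C_def D_def B_def X_def
        by (rule fox_matrix_even[OF M2 that r \<open>even k\<close>, symmetric])
      then show ?thesis by (simp add: det_smult3)
    qed
    show "det (PR t) = t ^ 6 * det (PP (1 / t))" if "t \<noteq> 0" for t
      unfolding PP_def PR_def by (rule det_reversal_even[OF that])
    show "det (PP 0) = c" "det (PR 0) = c"
      by (simp_all add: PP_def PR_def F_def G_def det_mul det_neg3 matrix_neg_left det_sums
          det_matpow dets det_Ad_word[OF M2] c_def)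
    show "c \<noteq> 0" using U \<open>n \<ge> 1\<close> \<open>m \<ge> 1\<close> by (simp add: c_def m_def z_def)
  qed
  moreover have "c = of_nat (k div 2 * n) * (cheb_S (k div 2 - 1) y)\<^sup>2 * (cheb_S (n - 1) z)\<^sup>2"
    using \<open>m \<ge> 1\<close> \<open>n \<ge> 1\<close> by (simp add: c_def m_def cheb_S_eq_chebU)
  ultimately show ?thesis by (simp add: z_def)
qed

section \<open>Odd k\<close>

lemma fox_matrix_odd:
  assumes M2: "M * M = 1" and t: "t \<noteq> 0" and r: "rho_word M y (relator k n) = mat 1"
    and "odd k"
  defines "m \<equiv> k div 2" and "C \<equiv> Ad_word M y ba_inv" and "D \<equiv> Ad_word M y b_inv_a"
    and "A \<equiv> Ad_word M y [la]" and "B \<equiv> Ad_word M y [lb]" and "X \<equiv> Ad_word M y (w_word k)"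
  shows "Phi M y t (fox GA (relator k n))
    = (mat 1 - smult3 t B) ** (\<Sum>j<n. smult3 (t ^ (2 * j)) (matpow X j))
      ** (smult3 t (matpow C m ** (B + B ** A ** (\<Sum>j<m. matpow D j) ** Ad_word M y [lb']))
          - (\<Sum>j<m. matpow C j) ** C)
      + smult3 (t ^ (2 * n)) (matpow X n)"
proof -
  have w: "w_word k = wpow ba_inv m @ [lb, la] @ wpow b_inv_a m"
    using \<open>odd k\<close> by (simp add: w_word_odd m_def)
  have PX: "Phi_word M y t (w_word k) = smult3 (t^2) X"
    using expsum_w_word_odd[OF \<open>odd k\<close>] by (simp add: Phi_word_expsum X_def)
  have Pba: "Phi_word M y t [lb, la] = smult3 (t^2) (B ** A)"
    using Ad_word_append[OF M2, of y "[lb]" "[la]"]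
    by (simp add: Phi_word_expsum expsum_Cons lb_def la_def B_def A_def)
  have tt: "t^2 * inverse t = t" "inverse t * t^2 = t" using t by (simp_all add: power2_eq_square)
  have "Phi M y t (fox GA (w_word k)) = Phi M y t (fox GA (wpow ba_inv m))
      + Phi_word M y t (wpow ba_inv m) ** (Phi M y t (fox GA [lb, la])
        + Phi_word M y t [lb, la] ** Phi M y t (fox GA (wpow b_inv_a m)))"
    unfolding w by (simp only: Phi_fox_append[OF M2 t])
  also have "\<dots> = smult3 t (matpow C m ** (B + B ** A ** (\<Sum>j<m. matpow D j) ** Ad_word M y [lb']))
      - (\<Sum>j<m. matpow C j) ** C"
    by (simp add: Phi_fox_ba_inv_pow[OF M2 t] Phi_fox_b_inv_a_pow[OF M2 t] Phi_word_wpow[OF M2 t]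
        Phi_fox_Cons[OF M2 t] Pba Phi_word_letters Phi_single tt C_def D_def B_def
        smult3_mult_left smult3_mult_right smult3_smult3 smult3_add_right matrix_add_ldistrib
        matrix_mul_assoc)
  finally have Fw: "Phi M y t (fox GA (w_word k)) = \<dots>" .
  have "matpow (Phi_word M y t (w_word k)) j = smult3 (t ^ (2 * j)) (matpow X j)" for j
    by (simp add: PX matpow_smult3 power_mult)
  then show ?thesis
    by (simp add: Phi_fox_relator[OF M2 t r] Fw Phi_word_letters B_def matrix_mul_assoc)
qed

lemma det_reversal_odd:
  assumes "t \<noteq> 0" "n \<ge> 1"
  shows "det ((smult3 t (mat 1) - B) ** (\<Sum>j<n. smult3 (t ^ (2 * (n - 1 - j))) (matpow X j))
      ** (F - smult3 t G) + matpow X n)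
    = t ^ (6 * n) * det ((mat 1 - smult3 (1 / t) B) ** (\<Sum>j<n. smult3 ((1 / t) ^ (2 * j)) (matpow X j))
      ** (smult3 (1 / t) F - G) + smult3 ((1 / t) ^ (2 * n)) (matpow X n))"
proof -
  obtain n' where n': "n = Suc n'" using assms(2) by (cases n) auto
  have S: "smult3 (t ^ (2 * n')) (\<Sum>j<n. smult3 ((1 / t) ^ (2 * j)) (matpow X j))
      = (\<Sum>j<n. smult3 (t ^ (2 * (n - 1 - j))) (matpow X j))"
  proof -
    have "t ^ (2 * n') * (1 / t) ^ (2 * j) = t ^ (2 * (n - 1 - j))" if "j < n" for j
    proof -
      have "2 * n' = 2 * (n' - j) + 2 * j" using that by (simp add: n')
      then have "t ^ (2 * n') = t ^ (2 * (n' - j)) * t ^ (2 * j)" by (metis power_add)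
      then show ?thesis using assms(1) by (simp add: n' power_one_over field_simps)
    qed
    then show ?thesis by (simp add: smult3_sum smult3_smult3)
  qed
  have tn: "t ^ (2 * n) = t * t ^ (2 * n') * t" by (simp add: n' power_add mult_ac)
  have "smult3 (t ^ (2 * n)) ((mat 1 - smult3 (1 / t) B)
        ** (\<Sum>j<n. smult3 ((1 / t) ^ (2 * j)) (matpow X j)) ** (smult3 (1 / t) F - G))
      = smult3 t (mat 1 - smult3 (1 / t) B)
        ** smult3 (t ^ (2 * n')) (\<Sum>j<n. smult3 ((1 / t) ^ (2 * j)) (matpow X j))
        ** smult3 t (smult3 (1 / t) F - G)"
    unfolding tn by (rule smult3_sandwich)
  also have "\<dots> = (smult3 t (mat 1) - B) ** (\<Sum>j<n. smult3 (t ^ (2 * (n - 1 - j))) (matpow X j))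
      ** (F - smult3 t G)"
    using assms(1) by (simp add: S smult3_diff_right smult3_smult3)
  finally have "smult3 (t ^ (2 * n)) ((mat 1 - smult3 (1 / t) B)
        ** (\<Sum>j<n. smult3 ((1 / t) ^ (2 * j)) (matpow X j)) ** (smult3 (1 / t) F - G)
        + smult3 ((1 / t) ^ (2 * n)) (matpow X n))
      = (smult3 t (mat 1) - B) ** (\<Sum>j<n. smult3 (t ^ (2 * (n - 1 - j))) (matpow X j))
        ** (F - smult3 t G) + matpow X n"
    using assms(1) by (simp add: smult3_add_right smult3_smult3 power_one_over
        power_mult_distrib[symmetric])
  then have "det ((smult3 t (mat 1) - B) ** (\<Sum>j<n. smult3 (t ^ (2 * (n - 1 - j))) (matpow X j))
        ** (F - smult3 t G) + matpow X n)
      = (t ^ (2 * n))^3 * det ((mat 1 - smult3 (1 / t) B)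
        ** (\<Sum>j<n. smult3 ((1 / t) ^ (2 * j)) (matpow X j)) ** (smult3 (1 / t) F - G)
        + smult3 ((1 / t) ^ (2 * n)) (matpow X n))"
    by (metis det_smult3)
  then show ?thesis by (simp add: power_mult[symmetric] mult.commute)
qed

lemma sum_smult3_zero_power:
  assumes "n \<ge> 1"
  shows "(\<Sum>j<n. smult3 ((0::complex) ^ (2 * j)) (A j)) = A 0"
    "(\<Sum>j<n. smult3 ((0::complex) ^ (2 * (n - 1 - j))) (A j)) = A (n - 1)"
proof -
  have "(\<Sum>j<n. smult3 ((0::complex) ^ (2 * j)) (A j)) = (\<Sum>j<n. if j = 0 then A j else 0)"
    by (rule sum.cong) (auto simp: power_0_left)
  also have "\<dots> = A 0" using assms by (simp add: sum.delta)
  finally show "(\<Sum>j<n. smult3 ((0::complex) ^ (2 * j)) (A j)) = A 0" .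
  have "(\<Sum>j<n. smult3 ((0::complex) ^ (2 * (n - 1 - j))) (A j))
      = (\<Sum>j<n. if j = n - 1 then A j else 0)"
    by (rule sum.cong) (auto simp: power_0_left)
  also have "\<dots> = A (n - 1)" using assms by (simp add: sum.delta)
  finally show "(\<Sum>j<n. smult3 ((0::complex) ^ (2 * (n - 1 - j))) (A j)) = A (n - 1)" .
qed

text \<open>
  For odd k, X = C^m B A D^m has inverse Dmi Ai Bi Cmi, with Cm = C^m, Dm = D^m, D = B^-1 A and
  SD the geometric sum of D; the second factor of the left-hand side is then 1 - A X^-1 F for the
  coefficient F of t in Phi(dw/da).
\<close>

lemma odd_leading_identity:
  fixes A Ai B Bi Cm Cmi D Dm Dmi SD :: "'a::ring_1^'n^'n"
  assumes "Ai ** A = mat 1" "A ** Ai = mat 1" "Bi ** B = mat 1" "Cmi ** Cm = mat 1"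
    "Dm ** Dmi = mat 1" "D = Bi ** A" "SD ** (D - mat 1) = Dm - mat 1"
  shows "(Dm ** Ai) ** (mat 1 - A ** (Dmi ** Ai ** Bi ** Cmi) ** (Cm ** (B + B ** A ** SD ** Bi)))
    = - (SD ** Ai)"
proof -
  have cancel: "Ai ** A = mat 1" "A ** Ai = mat 1" "Bi ** B = mat 1" "Cmi ** Cm = mat 1"
    "Dm ** Dmi = mat 1" "Z ** Ai ** A = Z" "Z ** A ** Ai = Z" "Z ** Bi ** B = Z"
    "Z ** Cmi ** Cm = Z" "Z ** Dm ** Dmi = Z" for Z
    using assms(1-5) by (simp_all flip: matrix_mul_assoc)
  have "(Dm ** Ai) ** (mat 1 - A ** (Dmi ** Ai ** Bi ** Cmi) ** (Cm ** (B + B ** A ** SD ** Bi)))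
      = Dm ** Ai - Ai - SD ** Bi"
    by (simp add: matrix_diff_ldistrib matrix_add_ldistrib matrix_mul_assoc cancel)
  also have "\<dots> = - (SD ** Ai)"
  proof -
    have "Dm = SD ** D - SD + mat 1" using assms(7) by (simp add: matrix_diff_ldistrib algebra_simps)
    then have "Dm ** Ai = Ai + SD ** Bi - SD ** Ai"
      by (simp add: assms(6) matrix_add_rdistrib matrix_diff_rdistrib matrix_mul_assoc cancel)
    then show ?thesis by (simp add: algebra_simps)
  qed
  finally show ?thesis .
qed

lemma Ad_word_relation:
  assumes M2: "M * M = 1" and r: "rho_word M y (relator k n) = mat 1"
  shows "matpow (Ad_word M y (w_word k)) n ** Ad_word M y [la]
    = Ad_word M y [lb] ** matpow (Ad_word M y (w_word k)) n"
proof -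
  have "Ad_word M y (wpow (w_word k) n @ [la]) = Ad_word M y ([lb] @ wpow (w_word k) n)"
    using rho_relation[OF M2 r] by (simp only: Ad_word_def rho_word_append rho_word_single)
  then show ?thesis by (simp only: Ad_word_append[OF M2] Ad_word_wpow[OF M2])
qed

lemma Ad_word_relation_shift:
  assumes M2: "M * M = 1" and r: "rho_word M y (relator k n) = mat 1" and "n \<ge> 1"
  defines "X \<equiv> Ad_word M y (w_word k)"
  shows "Ad_word M y [lb] ** matpow X (n - 1) = matpow X n ** Ad_word M y [la] ** Ad_word M y (inv_word (w_word k))"
proof -
  obtain n' where n': "n = Suc n'" using \<open>n \<ge> 1\<close> by (cases n) auto
  have "X ** Ad_word M y (inv_word (w_word k)) = mat 1"
    using Ad_word_inv_word(2)[OF M2] by (simp add: X_def)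
  then have "Ad_word M y [lb] ** matpow X n'
      = Ad_word M y [lb] ** matpow X n' ** (X ** Ad_word M y (inv_word (w_word k)))" by simp
  also have "\<dots> = Ad_word M y [lb] ** matpow X n ** Ad_word M y (inv_word (w_word k))"
    by (simp only: n' matpow_Suc_right matrix_mul_assoc)
  finally show ?thesis
    using Ad_word_relation[OF M2 r] by (simp add: n' X_def matrix_mul_assoc)
qed

lemma det_odd_leading_factor:
  fixes M y :: complex
  assumes M2: "M * M = 1" and "odd k"
  defines "m \<equiv> k div 2" and "C \<equiv> Ad_word M y ba_inv" and "D \<equiv> Ad_word M y b_inv_a"
    and "A \<equiv> Ad_word M y [la]" and "B \<equiv> Ad_word M y [lb]"
    and "SD \<equiv> \<Sum>j<k div 2. matpow (Ad_word M y b_inv_a) j"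
  shows "det (mat 1 - A ** Ad_word M y (inv_word (w_word k))
      ** (matpow C m ** (B + B ** A ** SD ** Ad_word M y [lb']))) = - det SD"
proof -
  let ?Ad = "Ad_word M y"
  define Ai Bi where "Ai = ?Ad [la']" and "Bi = ?Ad [lb']"
  have inverses: "Ai ** A = mat 1" "A ** Ai = mat 1" "Bi ** B = mat 1"
    "?Ad (inv_word (wpow ba_inv m)) ** matpow C m = mat 1"
    "matpow D m ** ?Ad (inv_word (wpow b_inv_a m)) = mat 1"
    using Ad_word_inv_word[OF M2, where u = "[la]"] Ad_word_inv_word[OF M2, where u = "[lb]"]
      Ad_word_inv_word[OF M2, where u = "wpow ba_inv m"]
      Ad_word_inv_word[OF M2, where u = "wpow b_inv_a m"]
    by (simp_all add: inv_word_Cons A_def Ai_def B_def Bi_def C_def D_def Ad_word_wpow[OF M2])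
  have "inv_word (w_word k) = inv_word (wpow b_inv_a m) @ [la'] @ [lb'] @ inv_word (wpow ba_inv m)"
    using \<open>odd k\<close> by (simp add: w_word_odd m_def inv_word_append inv_word_Cons)
  then have Xi: "?Ad (inv_word (w_word k))
      = ?Ad (inv_word (wpow b_inv_a m)) ** Ai ** Bi ** ?Ad (inv_word (wpow ba_inv m))"
    by (simp only: Ad_word_append[OF M2] Ai_def Bi_def matrix_mul_assoc)
  have "D = Bi ** A" by (simp add: D_def Bi_def A_def Ad_word_append[OF M2, symmetric])
  moreover have "SD ** (D - mat 1) = matpow D m - mat 1"
    unfolding SD_def D_def m_def by (rule geometric_matrix_sum)
  ultimately have "(matpow D m ** Ai) ** (mat 1 - A ** ?Ad (inv_word (w_word k))
      ** (matpow C m ** (B + B ** A ** SD ** Bi))) = - (SD ** Ai)"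
    unfolding Xi using odd_leading_identity[OF inverses] by blast
  then have "det (matpow D m ** Ai) * det (mat 1 - A ** ?Ad (inv_word (w_word k))
      ** (matpow C m ** (B + B ** A ** SD ** Bi))) = - (det SD * det Ai)"
    by (metis det_mul det_neg3)
  moreover have "det (matpow D m ** Ai) = 1" "det Ai = 1"
    by (simp_all add: det_mul det_matpow D_def Ai_def det_Ad_word[OF M2])
  ultimately show ?thesis by (simp add: Bi_def)
qed

lemma det_odd_leading:
  assumes M2: "M * M = 1" and r: "rho_word M y (relator k n) = mat 1" and "odd k" "n \<ge> 1"
  defines "m \<equiv> k div 2" and "C \<equiv> Ad_word M y ba_inv"
    and "A \<equiv> Ad_word M y [la]" and "B \<equiv> Ad_word M y [lb]" and "X \<equiv> Ad_word M y (w_word k)"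
    and "SD \<equiv> \<Sum>j<k div 2. matpow (Ad_word M y b_inv_a) j"
  shows "det (matpow X n - B ** matpow X (n - 1) ** (matpow C m ** (B + B ** A ** SD ** Ad_word M y [lb'])))
    = - det SD"
proof -
  define F where "F = matpow C m ** (B + B ** A ** SD ** Ad_word M y [lb'])"
  have "matpow X n - B ** matpow X (n - 1) ** F
      = matpow X n ** (mat 1 - A ** Ad_word M y (inv_word (w_word k)) ** F)"
    unfolding B_def X_def Ad_word_relation_shift[OF M2 r \<open>n \<ge> 1\<close>]
    by (simp only: A_def matrix_diff_ldistrib matrix_mul_assoc matrix_mul_rid)
  moreover have "det (matpow X n) = 1" by (simp add: det_matpow X_def det_Ad_word[OF M2])
  moreover have "det (mat 1 - A ** Ad_word M y (inv_word (w_word k)) ** F) = - det SD"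
    using det_odd_leading_factor[OF M2 \<open>odd k\<close>, of y]
    unfolding F_def A_def B_def C_def m_def SD_def .
  ultimately show ?thesis unfolding F_def[symmetric] by (simp add: det_mul)
qed

lemma tap_shape_odd:
  assumes M2: "M * M = 1" and r: "rho_word M y (relator k n) = mat 1"
    and "odd k" "k \<ge> 3" "n \<ge> 1" and U: "chebU (k div 2) y \<noteq> 0"
  shows "tap_shape (adj_tap k n M y) (adj_tap_den M y) (6 * n - 3)
    (of_nat (k div 2) * (cheb_S (k div 2 - 1) y)\<^sup>2)"
proof -
  define m where "m = k div 2"
  define C D A B X where "C = Ad_word M y ba_inv" and "D = Ad_word M y b_inv_a"
    and "A = Ad_word M y [la]" and "B = Ad_word M y [lb]" and "X = Ad_word M y (w_word k)"
  define SD F G where "SD = (\<Sum>j<m. matpow D j)"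
    and "F = matpow C m ** (B + B ** A ** SD ** Ad_word M y [lb'])" and "G = (\<Sum>j<m. matpow C j) ** C"
  define PP where "PP t = (mat 1 - smult3 t B) ** (\<Sum>j<n. smult3 (t ^ (2 * j)) (matpow X j))
    ** (smult3 t F - G) + smult3 (t ^ (2 * n)) (matpow X n)" for t
  define PR where "PR t = (smult3 t (mat 1) - B) ** (\<Sum>j<n. smult3 (t ^ (2 * (n - 1 - j))) (matpow X j))
    ** (F - smult3 t G) + matpow X n" for t
  define c where "c = of_nat m * (chebU m y)^2"
  have "m \<ge> 1" using assms(3,4) unfolding m_def by presburger
  have dets: "det (\<Sum>j<m. matpow C j) = c" "det C = 1" "det SD = c"
    by (simp_all add: C_def D_def SD_def c_def det_sum_matpow_Ad_word[OF M2] det_Ad_word[OF M2]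
        trace_rho_ba_inv[OF M2] trace_rho_b_inv_a[OF M2])
  have "tap_shape (adj_tap k n M y) (adj_tap_den M y) (6 * n - 3) (- c)"
  proof (rule tap_shape_from_ends[OF M2 r y_ne_2[OF M2 r], where e = 0])
    show "polyfun (\<lambda>t. det (PP t))" "polyfun (\<lambda>t. det (PR t))"
      unfolding PP_def PR_def
      by (intro polyfun_det pmat_add pmat_mult pmat_diff pmat_smult3 pmat_const pmat_sum
          polyfun_id polyfun_power)+
    show "det (PP t) = t ^ 0 * det (Phi M y t (fox GA (relator k n)))" if "t \<noteq> 0" for t
      using fox_matrix_odd[OF M2 that r \<open>odd k\<close>]
      by (simp add: PP_def SD_def F_def G_def m_def C_def D_def A_def B_def X_def)
    show "det (PR t) = t ^ (6 * n) * det (PP (1 / t))" if "t \<noteq> 0" for t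
      unfolding PP_def PR_def by (rule det_reversal_odd[OF that \<open>n \<ge> 1\<close>])
    show "det (PP 0) = - c"
      unfolding PP_def sum_smult3_zero_power(1)[OF \<open>n \<ge> 1\<close>]
      using \<open>n \<ge> 1\<close> by (simp add: G_def det_neg3 det_mul dets power_0_left)
    have "PR 0 = matpow X n - B ** matpow X (n - 1) ** F"
      unfolding PR_def sum_smult3_zero_power(2)[OF \<open>n \<ge> 1\<close>] by (simp add: matrix_neg_left)
    then show "det (PR 0) = - c"
      using det_odd_leading[OF M2 r \<open>odd k\<close> \<open>n \<ge> 1\<close>]
      by (simp add: dets(3)[symmetric] F_def SD_def m_def C_def D_def A_def B_def X_def)
    show "- c \<noteq> 0" using U \<open>m \<ge> 1\<close> by (simp add: c_def m_def)
  qed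
  moreover have "c = of_nat (k div 2) * (cheb_S (k div 2 - 1) y)\<^sup>2"
    using \<open>m \<ge> 1\<close> by (simp add: c_def m_def cheb_S_eq_chebU)
  ultimately show ?thesis by (simp add: tap_shape_uminus)
qed

theorem proposition3p7:
  fixes k n :: nat and M y :: complex
  assumes "k \<ge> 1" and "n \<ge> 1"
    and "M = 1 \<or> M = -1"
    and "discrete_faithful (relator k n) M y"
  defines "z \<equiv> trace (rho_word M y (w_word k))"
    and "m \<equiv> k div 2"
  shows "(even k \<longrightarrow> tap_shape (adj_tap k n M y) (adj_tap_den M y) 3
            (of_nat (m * n) * (cheb_S (m - 1) y)\<^sup>2 * (cheb_S (n - 1) z)\<^sup>2))
       \<and> (odd k \<and> k \<ge> 3 \<longrightarrow> tap_shape (adj_tap k n M y) (adj_tap_den M y) (6 * n - 3)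
            (of_nat m * (cheb_S (m - 1) y)\<^sup>2))
       \<and> (k = 1 \<and> n \<ge> 2 \<longrightarrow> tap_shape (adj_tap k n M y) (adj_tap_den M y) (6 * n - 9) 1)"
proof -
  have M2: "M * M = 1" using assms(3) by auto
  have r: "rho_word M y (relator k n) = mat 1"
    and faith: "\<And>u. rho_word M y u = mat 1 \<or> rho_word M y u = - mat 1 \<Longrightarrow> gtriv (relator k n) u"
    using assms(4) unfolding discrete_faithful_def by blast+
  show ?thesis
  proof (intro conjI impI)
    assume "even k"
    with assms(1,2) show "tap_shape (adj_tap k n M y) (adj_tap_den M y) 3
        (of_nat (m * n) * (cheb_S (m - 1) y)\<^sup>2 * (cheb_S (n - 1) z)\<^sup>2)"
      unfolding z_def m_def
      by (intro tap_shape_even[OF M2 r] chebU_ne_0_even[OF M2 r] chebU_trace_w_ne_0[OF M2 r])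
  next
    assume "odd k \<and> k \<ge> 3"
    with assms(2) show "tap_shape (adj_tap k n M y) (adj_tap_den M y) (6 * n - 3)
        (of_nat m * (cheb_S (m - 1) y)\<^sup>2)"
      unfolding m_def by (intro tap_shape_odd[OF M2 r] chebU_ne_0_odd[OF M2 r _ _ _ faith]) auto
  next
    assume "k = 1 \<and> n \<ge> 2"
    with assms(2) M2 r faith have False using not_faithful_k1 by blast
    then show "tap_shape (adj_tap k n M y) (adj_tap_den M y) (6 * n - 9) 1" ..
  qed
qed

end
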